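(* Let $\delta:\,]0,+\infty[\to\mathbb R$ be nonnegative, bounded and continuously differentiable, and consider $\ddot r+\delta(r)\dot r=-1/r^2$, $r>0$. Fix $T,r_B>0$. Let $\mathcal I$ be the set of $v\in\mathbb R$ such that the solution $r$ with $r(0)=r_B$, $\dot r(0)=v$ is defined (with $r>0$) in the past up to time $t=-T$, and define $\mathfrak R:\mathcal I\to\mathbb R$ by $\mathfrak R(v)=r(-T)$. Then: (i) there exists $\beta\in\mathbb R$ such that $\mathcal I=\,]-\infty,\beta[$; (ii) $\mathfrak R$ is a decreasing diffeomorphism from $]-\infty,\beta[$ onto $]0,+\infty[$; precisely, $\mathfrak R'(v)<0$ for every $v<\beta$, $\lim_{v\to-\infty}\mathfrak R(v)=+\infty$ and $\lim_{v\to\beta^-}\mathfrak R(v)=0$. *)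

theory Defs
  imports "HOL-Analysis.Analysis"
begin

definition past_solution ::
  "(real \<Rightarrow> real) \<Rightarrow> real \<Rightarrow> real \<Rightarrow> real \<Rightarrow> (real \<Rightarrow> real) \<Rightarrow> bool" where
  "past_solution \<delta> T rB v r \<longleftrightarrow>
     (\<exists>r'. (\<forall>t\<in>{-T..0}. 0 < r t
              \<and> (r has_real_derivative r' t) (at t within {-T..0})
              \<and> (r' has_real_derivative (- \<delta> (r t) * r' t - 1 / (r t)^2)) (at t within {-T..0}))
          \<and> r 0 = rB \<and> r' 0 = v)"

definition admissible_velocities :: "(real \<Rightarrow> real) \<Rightarrow> real \<Rightarrow> real \<Rightarrow> real set" where
  "admissible_velocities \<delta> T rB = {v. \<exists>r. past_solution \<delta> T rB v r}"

definition past_position :: "(real \<Rightarrow> real) \<Rightarrow> real \<Rightarrow> real \<Rightarrow> real \<Rightarrow> real" where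
  "past_position \<delta> T rB v = (THE x. \<exists>r. past_solution \<delta> T rB v r \<and> r (-T) = x)"

end

theory Submission
  imports Defs
begin

text \<open>
  Reversing time, \<open>\<rho> s = r (- s)\<close> solves \<open>\<rho>'' = \<delta> \<rho> \<rho>' - 1 / \<rho>\<^sup>2\<close> on \<open>[0, T]\<close> with
  \<open>\<rho> 0 = rB\<close>, \<open>\<rho>' 0 = w = - v\<close>. With a primitive \<open>\<Delta>\<close> of \<open>\<delta>\<close> and \<open>q = \<rho>' - \<Delta> \<rho>\<close> this is the
  cooperative system \<open>\<rho>' = q + \<Delta> \<rho>\<close>, \<open>q' = - 1 / \<rho>\<^sup>2\<close>, so solutions are ordered like their
  initial velocities. Freezing the radius below a level \<open>\<epsilon>\<close> makes the field globally Lipschitz;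
  \<open>w\<close> is admissible iff some truncated solution stays above its level. The admissible set is
  therefore an up-set, open by continuous dependence, and bounded below because
  \<open>\<rho> s \<le> rB + w s\<close> for \<open>w \<le> 0\<close>; so it is \<open>]\<alpha>, \<infinity>[\<close>.

  The final radius \<open>R w = \<rho> T\<close> is increasing and grows linearly in \<open>w\<close>. Since \<open>\<rho>'\<close> stays
  negative once it is negative, \<open>\<rho> \<ge> min rB (R w)\<close> on \<open>[0, T]\<close>; so a positive lower bound
  for \<open>R\<close> would bound all radii from below uniformly and, by continuous dependence, make \<open>\<alpha>\<close>
  admissible. Hence \<open>R w \<rightarrow> 0\<close> as \<open>w \<rightarrow> \<alpha>\<close>. Finally \<open>R' w = \<eta> T\<close> for the variational
  system \<open>\<eta>' = \<delta> \<rho> \<eta> + \<zeta>\<close>, \<open>\<zeta>' = 2 \<eta> / \<rho>\<^sup>3\<close>, \<open>\<eta> 0 = 0\<close>, \<open>\<zeta> 0 = 1\<close>, which is cooperative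
  again: \<open>\<eta>, \<zeta> \<ge> 0\<close>, hence \<open>\<zeta> \<ge> 1\<close> and \<open>\<eta> T \<ge> T > 0\<close>.
\<close>

lemma has_real_derivative_nonpos_imp_antimono:
  fixes f :: "real \<Rightarrow> real"
  assumes deriv: "\<And>s. s \<in> {a..b} \<Longrightarrow> (f has_real_derivative f' s) (at s within {a..b})"
    and nonpos: "\<And>s. s \<in> {a..b} \<Longrightarrow> f' s \<le> 0"
    and "a \<le> x" "x \<le> y" "y \<le> b"
  shows "f y \<le> f x"
proof -
  have sub: "{x..y} \<subseteq> {a..b}" using assms by auto
  have "\<And>s. s \<in> {x..y} \<Longrightarrow> (f has_derivative (\<lambda>h. f' s * h)) (at s within {x..y})"
    using deriv sub by (metis DERIV_subset has_field_derivative_def subsetD)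
  then obtain s where s: "s \<in> {x..y}" "f y - f x = f' s * (y - x)"
    using mvt_very_simple[OF \<open>x \<le> y\<close>, of f "\<lambda>s h. f' s * h"] by auto
  have "f' s * (y - x) \<le> 0"
    using nonpos s(1) sub \<open>x \<le> y\<close> by (auto intro: mult_nonpos_nonneg)
  with s(2) show ?thesis by simp
qed

lemma nonneg_deriv_le_linear_imp_zero:
  fixes u :: "real \<Rightarrow> real"
  assumes deriv: "\<And>s. s \<in> {a..b} \<Longrightarrow> (u has_real_derivative u' s) (at s within {a..b})"
    and le: "\<And>s. s \<in> {a..b} \<Longrightarrow> u' s \<le> L * u s"
    and nonneg: "\<And>s. s \<in> {a..b} \<Longrightarrow> u s \<ge> 0"
    and "u a = 0" "t \<in> {a..b}"
  shows "u t = 0"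
proof -
  define k where "k s = u s * exp (- L * s)" for s
  have "k t \<le> k a"
  proof (rule has_real_derivative_nonpos_imp_antimono[where f = k])
    fix s assume s: "s \<in> {a..b}"
    show "(k has_real_derivative (u' s - L * u s) * exp (- L * s)) (at s within {a..b})"
      unfolding k_def by (rule derivative_eq_intros deriv[OF s] refl)+ (simp add: algebra_simps)
    show "(u' s - L * u s) * exp (- L * s) \<le> 0"
      using le[OF s] by (simp add: mult_nonpos_nonneg)
  qed (use \<open>t \<in> {a..b}\<close> in auto)
  then have "u t \<le> 0" by (simp add: k_def \<open>u a = 0\<close> mult_le_0_iff)
  with nonneg[OF \<open>t \<in> {a..b}\<close>] show ?thesis by simp
qed

lemma has_real_derivative_pos_part_sq_at:
  "((\<lambda>z::real. (max z 0)^2) has_real_derivative 2 * max z 0) (at z)"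
proof (cases z "0::real" rule: linorder_cases)
  case less
  have "((\<lambda>z::real. 0) has_real_derivative 2 * max z 0) (at z)"
    using less by simp
  then show ?thesis
    by (rule has_field_derivative_transform_within_open[where S="{..<0}"]) (use less in auto)
next
  case greater
  have "((\<lambda>z::real. z^2) has_real_derivative 2 * max z 0) (at z)"
    using greater by (auto intro!: derivative_eq_intros)
  then show ?thesis
    by (rule has_field_derivative_transform_within_open[where S="{0<..}"]) (use greater in auto)
next
  case equal
  have "((\<lambda>z::real. ((max z 0)^2 - (max 0 0)^2) / (z - 0)) \<longlongrightarrow> 0) (at 0)"
  proof (rule Lim_null_comparison)
    show "\<forall>\<^sub>F z in at 0. norm (((max z 0)^2 - (max 0 0)^2) / (z - 0)) \<le> \<bar>z\<bar>"
      by (intro always_eventually allI) (auto simp: power2_eq_square abs_if divide_simps max_def)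
    show "((\<lambda>z::real. \<bar>z\<bar>) \<longlongrightarrow> 0) (at 0)"
      using tendsto_rabs[OF tendsto_ident_at[of 0 UNIV]] by simp
  qed
  then show ?thesis using equal by (simp add: has_field_derivative_iff)
qed

lemma has_real_derivative_pos_part_sq:
  assumes "(y has_real_derivative y') (at t within S)"
  shows "((\<lambda>t. (max (y t) 0)^2) has_real_derivative 2 * max (y t) 0 * y') (at t within S)"
  using DERIV_chain2[OF has_real_derivative_pos_part_sq_at assms] by simp

lemma deriv_le_linear_imp_nonpos:
  fixes \<phi> :: "real \<Rightarrow> real"
  assumes deriv: "\<And>s. s \<in> {a..b} \<Longrightarrow> (\<phi> has_real_derivative \<phi>' s) (at s within {a..b})"
    and le: "\<And>s. s \<in> {a..b} \<Longrightarrow> \<phi> s > 0 \<Longrightarrow> \<phi>' s \<le> L * \<phi> s"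
    and "\<phi> a \<le> 0" "t \<in> {a..b}"
  shows "\<phi> t \<le> 0"
proof -
  have "(max (\<phi> t) 0)^2 = 0"
  proof (rule nonneg_deriv_le_linear_imp_zero[where u = "\<lambda>s. (max (\<phi> s) 0)^2"])
    fix s assume s: "s \<in> {a..b}"
    show "((\<lambda>s. (max (\<phi> s) 0)^2) has_real_derivative 2 * max (\<phi> s) 0 * \<phi>' s) (at s within {a..b})"
      by (rule has_real_derivative_pos_part_sq[OF deriv[OF s]])
    have "max (\<phi> s) 0 * \<phi>' s \<le> max (\<phi> s) 0 * (L * max (\<phi> s) 0)"
      using le[OF s] by (cases "\<phi> s > 0") auto
    then show "2 * max (\<phi> s) 0 * \<phi>' s \<le> 2 * L * (max (\<phi> s) 0)^2"
      by (simp add: power2_eq_square mult_ac)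
  qed (use assms in auto)
  then show ?thesis by simp
qed

text \<open>The derivative of the energy \<open>(max (- a) 0)\<^sup>2 + (max (- b) 0)\<^sup>2\<close> of the negative parts
  along \<open>a' = b + D\<close>, \<open>b' = E\<close>.\<close>

lemma neg_parts_energy_deriv_le:
  fixes a b D E M K :: real
  assumes "M \<ge> 0" "K \<ge> 0"
    and neg: "a < 0 \<Longrightarrow> M * a \<le> D \<and> K * a \<le> E"
    and nonneg: "0 \<le> a \<Longrightarrow> 0 \<le> D \<and> 0 \<le> E"
  shows "2 * max (- a) 0 * (- (b + D)) + 2 * max (- b) 0 * (- E)
           \<le> (1 + 2 * M + K) * ((max (- a) 0)^2 + (max (- b) 0)^2)"
proof (cases "a < 0")
  case True
  define bn where "bn = max (- b) 0"
  have bn: "0 \<le> bn" "- b \<le> bn" by (auto simp: bn_def)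
  have ab: "- a * (- b) \<le> - a * bn" using True bn by (intro mult_left_mono) auto
  have aD: "- a * (- D) \<le> - a * (- (M * a))" using True neg by (intro mult_left_mono) auto
  have bE: "bn * (- E) \<le> bn * (- (K * a))" using True neg bn by (intro mult_left_mono) auto
  have amgm: "2 * (- a * bn) \<le> a^2 + bn^2"
    using sum_squares_bound[of "- a" bn] by (simp add: power2_eq_square)
  have amgm_K: "K * (2 * (- a * bn)) \<le> K * (a^2 + bn^2)" using amgm \<open>K \<ge> 0\<close> by (rule mult_left_mono)
  have "2 * max (- a) 0 * (- (b + D)) + 2 * bn * (- E)
      = 2 * (- a * (- b)) + 2 * (- a * (- D)) + 2 * (bn * (- E))"
    using True by (simp add: algebra_simps)
  also have "\<dots> \<le> 2 * (- a * bn) + 2 * (- a * (- (M * a))) + 2 * (bn * (- (K * a)))"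
    using ab aD bE by linarith
  also have "\<dots> = 2 * (- a * bn) + 2 * M * a^2 + K * (2 * (- a * bn))"
    by (simp add: power2_eq_square algebra_simps)
  also have "\<dots> \<le> (a^2 + bn^2) + 2 * M * a^2 + K * (a^2 + bn^2)"
    using amgm amgm_K by linarith
  also have "\<dots> \<le> (1 + 2 * M + K) * (a^2 + bn^2)"
  proof -
    have "(1 + 2 * M + K) * (a^2 + bn^2) = (a^2 + bn^2) + 2 * M * a^2 + K * (a^2 + bn^2) + 2 * (M * bn^2)"
      by (simp add: algebra_simps)
    moreover have "0 \<le> M * bn^2" using \<open>M \<ge> 0\<close> by simp
    ultimately show ?thesis by linarith
  qed
  finally show ?thesis using True by (simp add: bn_def)
next
  case False
  then have "0 \<le> E" using nonneg by simp
  then have "2 * max (- b) 0 * (- E) \<le> 0" by (simp add: mult_nonneg_nonpos)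
  moreover have "2 * max (- a) 0 * (- (b + D)) = 0" using False by simp
  moreover have "0 \<le> (1 + 2 * M + K) * ((max (- a) 0)^2 + (max (- b) 0)^2)" using assms(1,2) by simp
  ultimately show ?thesis by linarith
qed

lemma cooperative_system_nonneg:
  fixes a b D E :: "real \<Rightarrow> real"
  assumes "M \<ge> 0" "K \<ge> 0"
    and da: "\<And>s. s \<in> {0..T} \<Longrightarrow> (a has_real_derivative b s + D s) (at s within {0..T})"
    and db: "\<And>s. s \<in> {0..T} \<Longrightarrow> (b has_real_derivative E s) (at s within {0..T})"
    and neg: "\<And>s. s \<in> {0..T} \<Longrightarrow> a s < 0 \<Longrightarrow> M * a s \<le> D s \<and> K * a s \<le> E s"
    and nonneg: "\<And>s. s \<in> {0..T} \<Longrightarrow> 0 \<le> a s \<Longrightarrow> 0 \<le> D s \<and> 0 \<le> E s"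
    and "0 \<le> a 0" "0 \<le> b 0" "t \<in> {0..T}"
  shows "0 \<le> a t \<and> 0 \<le> b t"
proof -
  define V where "V s = (max (- a s) 0)^2 + (max (- b s) 0)^2" for s
  have "V t = 0"
  proof (rule nonneg_deriv_le_linear_imp_zero[where u = V and L = "1 + 2 * M + K"])
    fix s assume s: "s \<in> {0..T}"
    from DERIV_add[OF DERIV_minus[OF da[OF s], THEN has_real_derivative_pos_part_sq]
        DERIV_minus[OF db[OF s], THEN has_real_derivative_pos_part_sq]]
    show "(V has_real_derivative 2 * max (- a s) 0 * (- (b s + D s)) + 2 * max (- b s) 0 * (- E s))
        (at s within {0..T})"
      unfolding V_def[abs_def] by simp
    show "2 * max (- a s) 0 * (- (b s + D s)) + 2 * max (- b s) 0 * (- E s) \<le> (1 + 2 * M + K) * V s"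
      unfolding V_def using assms(1,2) neg[OF s] nonneg[OF s] by (rule neg_parts_energy_deriv_le)
  qed (use assms in \<open>auto simp: V_def\<close>)
  then show ?thesis by (simp add: V_def max_def split: if_splits)
qed

lemma has_real_derivative_fst:
  "(x has_vector_derivative v) F \<Longrightarrow> ((\<lambda>t. fst (x t)) has_real_derivative fst v) F"
  unfolding has_vector_derivative_def has_field_derivative_def
  by (drule has_derivative_fst) (simp add: mult_commute_abs)

lemma has_real_derivative_snd:
  "(x has_vector_derivative v) F \<Longrightarrow> ((\<lambda>t. snd (x t)) has_real_derivative snd v) F"
  unfolding has_vector_derivative_def has_field_derivative_def
  by (drule has_derivative_snd) (simp add: mult_commute_abs)

lemma abs_fst_le_norm: "\<bar>fst (p :: real \<times> real)\<bar> \<le> norm p"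
  by (metis norm_fst_le prod.collapse real_norm_def)

lemma abs_snd_le_norm: "\<bar>snd (p :: real \<times> real)\<bar> \<le> norm p"
  by (metis norm_snd_le prod.collapse real_norm_def)

lemma norm_Pair_linear_le:
  fixes u v d k r1 r2 :: real
  assumes "0 \<le> d" "d \<le> M" "0 \<le> k" "k \<le> K"
  shows "norm (v + d * u + r1, k * u + r2) \<le> (1 + M + K) * norm (u, v) + \<bar>r1\<bar> + \<bar>r2\<bar>"
proof -
  have n: "\<bar>u\<bar> \<le> norm (u, v)" "\<bar>v\<bar> \<le> norm (u, v)"
    using abs_fst_le_norm[of "(u, v)"] abs_snd_le_norm[of "(u, v)"] by simp_all
  have "0 \<le> M" "0 \<le> K" using assms by linarith+
  have "\<bar>d * u\<bar> \<le> M * norm (u, v)"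
    using mult_mono[OF assms(2) n(1) \<open>0 \<le> M\<close>] assms(1) by (simp add: abs_mult)
  moreover have "\<bar>k * u\<bar> \<le> K * norm (u, v)"
    using mult_mono[OF assms(4) n(1) \<open>0 \<le> K\<close>] assms(3) by (simp add: abs_mult)
  moreover have "norm (v + d * u + r1, k * u + r2) \<le> \<bar>v + d * u + r1\<bar> + \<bar>k * u + r2\<bar>"
    by (metis norm_Pair_le real_norm_def)
  moreover have "(1 + M + K) * norm (u, v) = norm (u, v) + M * norm (u, v) + K * norm (u, v)"
    by (simp add: distrib_right)
  ultimately show ?thesis
    using n abs_triangle_ineq[of "v + d * u" r1] abs_triangle_ineq[of v "d * u"] abs_triangle_ineq[of "k * u" r2]
    by linarith
qed

lemma has_real_derivative_sqrt_inner_plus: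
  fixes e :: "real \<Rightarrow> 'a::real_inner"
  assumes "(e has_vector_derivative e') (at s within S)" "\<eta> \<noteq> 0"
  shows "((\<lambda>s. sqrt (e s \<bullet> e s + \<eta>^2)) has_real_derivative (e s \<bullet> e') / sqrt (e s \<bullet> e s + \<eta>^2))
    (at s within S)"
proof -
  have pos: "0 < e s \<bullet> e s + \<eta>^2" using assms(2) by (simp add: add_nonneg_pos)
  have "((\<lambda>s. e s \<bullet> e s) has_derivative (\<lambda>h. e s \<bullet> (h *\<^sub>R e') + (h *\<^sub>R e') \<bullet> e s)) (at s within S)"
    using assms(1) unfolding has_vector_derivative_def by (intro has_derivative_inner)
  then have "((\<lambda>s. e s \<bullet> e s + \<eta>^2) has_real_derivative 2 * (e s \<bullet> e')) (at s within S)"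
    unfolding has_field_derivative_def
    by (rule has_derivative_eq_rhs[OF has_derivative_add_const]) (auto simp: fun_eq_iff inner_commute algebra_simps)
  from DERIV_chain2[OF DERIV_real_sqrt[OF pos] this] show ?thesis
    using pos by (simp add: field_simps)
qed

text \<open>The norm is not differentiable at \<open>0\<close>, so it is replaced by the smooth majorant
  \<open>sqrt (\<parallel>e\<parallel>\<^sup>2 + \<eta>\<^sup>2)\<close> and \<open>\<eta> \<rightarrow> 0\<close>.\<close>

lemma gronwall_affine:
  fixes e :: "real \<Rightarrow> 'a::real_inner"
  assumes deriv: "\<And>s. s \<in> {0..T} \<Longrightarrow> (e has_vector_derivative e' s) (at s within {0..T})"
    and bound: "\<And>s. s \<in> {0..T} \<Longrightarrow> norm (e' s) \<le> L * norm (e s) + C"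
    and "L > 0" "C \<ge> 0" "t \<in> {0..T}"
  shows "norm (e t) \<le> (norm (e 0) + C / L) * exp (L * t) - C / L"
proof (rule field_le_epsilon)
  fix \<epsilon> :: real assume "\<epsilon> > 0"
  define \<eta> where "\<eta> = \<epsilon> / exp (L * t)"
  have "\<eta> > 0" using \<open>\<epsilon> > 0\<close> by (simp add: \<eta>_def)
  define v where "v s = sqrt (e s \<bullet> e s + \<eta>^2)" for s
  have v_pos: "v s > 0" for s
    unfolding v_def using \<open>\<eta> > 0\<close> by (intro real_sqrt_gt_zero) (simp add: add_nonneg_pos)
  have norm_le_v: "norm (e s) \<le> v s" for s
    unfolding v_def by (rule real_le_rsqrt) (simp add: power2_norm_eq_inner)
  have v_deriv: "(v has_real_derivative (e s \<bullet> e' s) / v s) (at s within {0..T})" if "s \<in> {0..T}" for s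
    unfolding v_def[abs_def] using has_real_derivative_sqrt_inner_plus[OF deriv[OF that]] \<open>\<eta> > 0\<close> by simp
  define k where "k s = (v s + C / L) * exp (- L * s)" for s
  have "k t \<le> k 0"
  proof (rule has_real_derivative_nonpos_imp_antimono[where f = k])
    fix s assume s: "s \<in> {0..T}"
    show "(k has_real_derivative ((e s \<bullet> e' s) / v s - L * v s - C) * exp (- L * s)) (at s within {0..T})"
      unfolding k_def by (rule derivative_eq_intros v_deriv[OF s] refl)+ (use \<open>L > 0\<close> in \<open>simp add: algebra_simps\<close>)
    have "(e s \<bullet> e' s) / v s \<le> norm (e s) * norm (e' s) / v s"
      using v_pos[of s] by (intro divide_right_mono norm_cauchy_schwarz) auto
    also have "\<dots> \<le> norm (e' s)"
      using v_pos[of s] norm_le_v[of s] by (auto simp: divide_simps mult.commute intro: mult_right_mono)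
    also have "\<dots> \<le> L * v s + C"
      using bound[OF s] mult_left_mono[OF norm_le_v[of s], of L] \<open>L > 0\<close> by linarith
    finally show "((e s \<bullet> e' s) / v s - L * v s - C) * exp (- L * s) \<le> 0"
      by (simp add: mult_nonpos_nonneg)
  qed (use \<open>t \<in> {0..T}\<close> in auto)
  then have "v t + C / L \<le> (v 0 + C / L) * exp (L * t)"
    by (simp add: k_def exp_minus field_simps)
  also have "v 0 \<le> norm (e 0) + \<eta>"
    unfolding v_def using \<open>\<eta> > 0\<close>
    by (intro real_le_lsqrt) (auto simp: power2_eq_square algebra_simps power2_norm_eq_inner[symmetric])
  then have "(v 0 + C / L) * exp (L * t) \<le> (norm (e 0) + \<eta> + C / L) * exp (L * t)"
    by (intro mult_right_mono) auto
  finally show "norm (e t) \<le> (norm (e 0) + C / L) * exp (L * t) - C / L + \<epsilon>"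
    using norm_le_v[of t] by (simp add: \<eta>_def algebra_simps)
qed

lemma norm_integral_exp_weighted_le:
  fixes g :: "real \<Rightarrow> 'a::banach"
  assumes "K > 0" "0 \<le> u" "g integrable_on {0..u}"
    and bound: "\<And>s. s \<in> {0..u} \<Longrightarrow> norm (g s) \<le> C * exp (K * s)"
  shows "exp (- K * u) * norm (integral {0..u} g) \<le> C / K"
proof -
  have exp_int: "((\<lambda>s. C * exp (K * s)) has_integral C * (exp (K * u) / K - 1 / K)) {0..u}"
  proof -
    have "((\<lambda>s. exp (K * s)) has_integral (exp (K * u) / K - exp (K * 0) / K)) {0..u}"
      by (rule fundamental_theorem_of_calculus[OF \<open>0 \<le> u\<close>])
        (use \<open>K > 0\<close> in \<open>auto intro!: derivative_eq_intros
          simp: has_real_derivative_iff_has_vector_derivative[symmetric]\<close>)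
    then show ?thesis by (simp add: has_integral_mult_right)
  qed
  have "norm (g 0) \<le> C" using bound[of 0] \<open>0 \<le> u\<close> by simp
  then have "C \<ge> 0" by (meson norm_ge_zero order_trans)
  have "norm (integral {0..u} g) \<le> integral {0..u} (\<lambda>s. C * exp (K * s))"
    using exp_int bound \<open>g integrable_on {0..u}\<close>
    by (intro integral_norm_bound_integral) (auto simp: integrable_on_def)
  also have "\<dots> = C * (exp (K * u) / K - 1 / K)"
    using exp_int by (rule integral_unique)
  finally have "exp (- K * u) * norm (integral {0..u} g) \<le> exp (- K * u) * (C * (exp (K * u) / K - 1 / K))"
    by (simp add: mult_left_mono)
  also have "\<dots> = C / K * (1 - exp (- K * u))"
    using \<open>K > 0\<close> by (simp add: field_simps exp_minus)
  also have "\<dots> \<le> C / K"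
    using \<open>K > 0\<close> \<open>C \<ge> 0\<close> by (intro mult_left_le) auto
  finally show ?thesis .
qed

lemma clamped_continuous_in_bcontfun:
  fixes h :: "real \<Rightarrow> 'a::metric_space"
  assumes "continuous_on {0..T} h" "0 \<le> T"
  shows "(\<lambda>t. h (max 0 (min T t))) \<in> bcontfun"
proof -
  have "continuous_on UNIV (\<lambda>t. max 0 (min T t))"
    by (intro continuous_intros)
  then have "continuous_on UNIV (\<lambda>t. h (max 0 (min T t)))"
    by (rule continuous_on_compose2[OF assms(1)]) (use assms(2) in auto)
  moreover have "bounded (h ` {0..T})"
    by (rule compact_imp_bounded[OF compact_continuous_image[OF assms(1)]]) simp
  then have "bounded (range (\<lambda>t. h (max 0 (min T t))))"
    by (rule bounded_subset) (use assms(2) in auto)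
  ultimately show ?thesis by (simp add: bcontfun_def)
qed

lemma bielecki_contraction:
  fixes F :: "real \<Rightarrow> 'a::banach \<Rightarrow> 'a" and f1 f2 :: "real \<Rightarrow> 'a"
  assumes lip: "\<And>s x y. s \<in> {0..u} \<Longrightarrow> norm (F s x - F s y) \<le> L * norm (x - y)"
    and "L > 0" "0 \<le> u"
    and int: "(\<lambda>s. F s (exp (2 * L * s) *\<^sub>R f1 s)) integrable_on {0..u}"
      "(\<lambda>s. F s (exp (2 * L * s) *\<^sub>R f2 s)) integrable_on {0..u}"
    and dist: "\<And>s. s \<in> {0..u} \<Longrightarrow> dist (f1 s) (f2 s) \<le> D"
  shows "exp (- (2 * L) * u) * norm (integral {0..u} (\<lambda>s. F s (exp (2 * L * s) *\<^sub>R f1 s))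
      - integral {0..u} (\<lambda>s. F s (exp (2 * L * s) *\<^sub>R f2 s))) \<le> D / 2"
proof -
  have "norm (F s (exp (2 * L * s) *\<^sub>R f1 s) - F s (exp (2 * L * s) *\<^sub>R f2 s)) \<le> L * D * exp (2 * L * s)"
    if "s \<in> {0..u}" for s
  proof -
    have "norm (F s (exp (2 * L * s) *\<^sub>R f1 s) - F s (exp (2 * L * s) *\<^sub>R f2 s))
        \<le> L * norm (exp (2 * L * s) *\<^sub>R f1 s - exp (2 * L * s) *\<^sub>R f2 s)"
      by (rule lip[OF that])
    also have "\<dots> = L * (exp (2 * L * s) * dist (f1 s) (f2 s))"
      by (simp add: dist_norm scaleR_right_diff_distrib[symmetric])
    also have "\<dots> \<le> L * (exp (2 * L * s) * D)"
      using \<open>L > 0\<close> dist[OF that] by (intro mult_left_mono) auto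
    finally show ?thesis by (simp add: mult_ac)
  qed
  then have "exp (- (2 * L) * u) * norm (integral {0..u}
      (\<lambda>s. F s (exp (2 * L * s) *\<^sub>R f1 s) - F s (exp (2 * L * s) *\<^sub>R f2 s))) \<le> L * D / (2 * L)"
    using int \<open>L > 0\<close> \<open>0 \<le> u\<close> by (intro norm_integral_exp_weighted_le integrable_diff) auto
  then show ?thesis using int \<open>L > 0\<close> by (simp add: integral_diff)
qed

lemma has_vector_derivative_integral_equation:
  fixes g :: "real \<Rightarrow> 'a::banach"
  assumes "continuous_on {0..T} g" "\<And>t. t \<in> {0..T} \<Longrightarrow> x t = x0 + integral {0..t} g" "t \<in> {0..T}"
  shows "(x has_vector_derivative g t) (at t within {0..T})"
proof -
  have "((\<lambda>u. x0 + integral {0..u} g) has_vector_derivative g t) (at t within {0..T})"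
    using integral_has_vector_derivative[OF assms(1,3)] by (auto intro!: derivative_eq_intros)
  from has_vector_derivative_transform[OF assms(3) assms(2) this] show ?thesis .
qed

text \<open>In the variable \<open>f t = exp (- 2 L t) x t\<close> (Bielecki's weighted norm) the Picard operator
  is a contraction with constant \<open>1/2\<close> on the whole interval; it is extended constantly
  outside \<open>[0, T]\<close> to act on bounded continuous functions.\<close>

lemma lipschitz_ode_solution_exists:
  fixes F :: "real \<Rightarrow> 'a::banach \<Rightarrow> 'a"
  assumes "0 \<le> T"
    and cont: "continuous_on ({0..T} \<times> UNIV) (\<lambda>(t, x). F t x)"
    and lip: "\<And>t x y. t \<in> {0..T} \<Longrightarrow> norm (F t x - F t y) \<le> L * norm (x - y)"
    and "0 < L"
  shows "\<exists>x. x 0 = x0 \<and> (\<forall>t\<in>{0..T}. (x has_vector_derivative F t (x t)) (at t within {0..T}))"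
proof -
  define c where "c t = max 0 (min T t)" for t :: real
  have c: "c t \<in> {0..T}" "t \<in> {0..T} \<Longrightarrow> c t = t" for t using \<open>0 \<le> T\<close> by (auto simp: c_def)
  define g where "g f s = F s (exp (2 * L * s) *\<^sub>R apply_bcontfun f s)" for f :: "real \<Rightarrow>\<^sub>C 'a" and s
  have g_cont: "continuous_on {0..T} (g f)" for f
  proof -
    have "continuous_on {0..T} (\<lambda>s. (s, exp (2 * L * s) *\<^sub>R apply_bcontfun f s))"
      by (intro continuous_intros continuous_on_apply_bcontfun)
    from continuous_on_compose2[OF cont this] show ?thesis by (auto simp: g_def)
  qed
  have g_int: "g f integrable_on {0..u}" if "u \<in> {0..T}" for f u
    by (rule integrable_continuous_interval, rule continuous_on_subset[OF g_cont]) (use that in auto)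
  define h where "h f u = exp (- (2 * L) * u) *\<^sub>R (x0 + integral {0..u} (g f))" for f u
  have "continuous_on {0..T} (h f)" for f
    unfolding h_def using integral_has_vector_derivative[OF g_cont]
    by (intro continuous_intros) (meson continuous_on_eq_continuous_within has_vector_derivative_continuous)
  then have "h f \<circ> c \<in> bcontfun" for f
    using clamped_continuous_in_bcontfun[OF _ \<open>0 \<le> T\<close>, of "h f"] by (simp add: o_def c_def)
  then have apply_picard: "apply_bcontfun (Bcontfun (h f \<circ> c)) t = h f (c t)" for f t
    by (simp add: Bcontfun_inverse)
  have "dist (Bcontfun (h f1 \<circ> c)) (Bcontfun (h f2 \<circ> c)) \<le> (1/2) * dist f1 f2" for f1 f2
  proof (rule dist_bound)
    fix t
    have "exp (- (2 * L) * c t) * norm (integral {0..c t} (g f1) - integral {0..c t} (g f2)) \<le> dist f1 f2 / 2"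
      using c(1)[of t] g_int[of "c t"] unfolding g_def
      by (intro bielecki_contraction \<open>L > 0\<close>) (auto intro: lip dist_bounded)
    then show "dist (apply_bcontfun (Bcontfun (h f1 \<circ> c)) t) (apply_bcontfun (Bcontfun (h f2 \<circ> c)) t)
        \<le> (1/2) * dist f1 f2"
      by (simp add: apply_picard h_def dist_norm scaleR_right_diff_distrib[symmetric])
  qed
  then obtain f where "Bcontfun (h f \<circ> c) = f"
    using banach_fix_type[of "1/2" "\<lambda>f. Bcontfun (h f \<circ> c)"] by auto
  define x where "x t = exp (2 * L * t) *\<^sub>R apply_bcontfun f t" for t
  have x_eq: "x t = x0 + integral {0..t} (g f)" if "t \<in> {0..T}" for t
    using that apply_picard[of f t] \<open>Bcontfun (h f \<circ> c) = f\<close> by (simp add: x_def h_def c(2) exp_minus)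
  show ?thesis
  proof (intro exI conjI ballI)
    show "x 0 = x0" using x_eq[of 0] \<open>0 \<le> T\<close> by simp
    fix t assume "t \<in> {0..T}"
    from has_vector_derivative_integral_equation[OF g_cont x_eq this]
    show "(x has_vector_derivative F t (x t)) (at t within {0..T})"
      by (simp only: g_def x_def[symmetric])
  qed
qed

lemma inverse_square_lipschitz:
  fixes \<epsilon> a b :: real
  assumes "\<epsilon> > 0" "a \<ge> \<epsilon>" "b \<ge> \<epsilon>"
  shows "\<bar>1 / a^2 - 1 / b^2\<bar> \<le> 2 / \<epsilon>^3 * \<bar>a - b\<bar>"
proof -
  have "a > 0" "b > 0" using assms by linarith+
  have "\<epsilon>^3 \<le> a * b^2" "\<epsilon>^3 \<le> a^2 * b"
  proof -
    have ee: "\<epsilon> * \<epsilon> \<le> b * b" "\<epsilon> * \<epsilon> \<le> a * a"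
      using assms by (simp_all add: mult_mono)
    have "\<epsilon> * (\<epsilon> * \<epsilon>) \<le> a * (b * b)" using assms ee by (intro mult_mono) auto
    moreover have "\<epsilon> * (\<epsilon> * \<epsilon>) \<le> b * (a * a)" using assms ee by (intro mult_mono) auto
    ultimately
    show "\<epsilon>^3 \<le> a * b^2" "\<epsilon>^3 \<le> a^2 * b" by (simp_all add: power3_eq_cube power2_eq_square mult_ac)
  qed
  have "1 / a^2 - 1 / b^2 = (b - a) * (1 / (a * b^2) + 1 / (a^2 * b))"
    using \<open>a > 0\<close> \<open>b > 0\<close> by (simp add: divide_simps power2_eq_square) (simp add: algebra_simps)
  then have "\<bar>1 / a^2 - 1 / b^2\<bar> = \<bar>a - b\<bar> * (1 / (a * b^2) + 1 / (a^2 * b))"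
    using \<open>a > 0\<close> \<open>b > 0\<close> by (simp add: abs_mult abs_minus_commute)
  also have "\<dots> \<le> \<bar>a - b\<bar> * (1 / \<epsilon>^3 + 1 / \<epsilon>^3)"
    using \<open>\<epsilon>^3 \<le> a * b^2\<close> \<open>\<epsilon>^3 \<le> a^2 * b\<close> assms by (intro mult_left_mono add_mono divide_left_mono) auto
  finally show ?thesis by (simp add: mult_ac)
qed

lemma inverse_square_taylor:
  fixes a b e K :: real
  assumes "e > 0" "a \<ge> e" "b \<ge> e" "a \<le> K" "b \<le> K"
  shows "\<bar>1 / a^2 - 1 / b^2 - 2 * (b - a) / a^3\<bar> \<le> 3 * K / e^5 * (b - a)^2"
proof -
  have "a > 0" "b > 0" using assms by linarith+
  have "1 / a^2 - 1 / b^2 - 2 * (b - a) / a^3 = - ((b - a)^2 * (a + 2 * b) / (a^3 * b^2))"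
    using \<open>a > 0\<close> \<open>b > 0\<close> by (simp add: field_simps power2_eq_square power3_eq_cube)
  then have "\<bar>1 / a^2 - 1 / b^2 - 2 * (b - a) / a^3\<bar> = (b - a)^2 * (a + 2 * b) / (a^3 * b^2)"
    using \<open>a > 0\<close> \<open>b > 0\<close> by simp
  also have "\<dots> \<le> (b - a)^2 * (3 * K) / e^5"
  proof (intro frac_le mult_left_mono)
    have "e^3 * e^2 \<le> a^3 * b^2" using assms by (intro mult_mono power_mono) auto
    then show "e^5 \<le> a^3 * b^2" by (simp add: power_add[symmetric])
  qed (use assms \<open>a > 0\<close> \<open>b > 0\<close> in auto)
  finally show ?thesis by (simp add: mult_ac)
qed

lemma abs_divide_le_of_le_square:
  fixes R h c E :: real
  assumes "\<bar>R\<bar> \<le> c * (\<bar>h\<bar> * E)^2"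
  shows "\<bar>R / h\<bar> \<le> c * E^2 * \<bar>h\<bar>"
proof (cases "h = 0")
  case False
  have "\<bar>R / h\<bar> = \<bar>R\<bar> / \<bar>h\<bar>" by simp
  also have "\<dots> \<le> c * (\<bar>h\<bar> * E)^2 / \<bar>h\<bar>" using assms by (intro divide_right_mono) auto
  also have "\<dots> = c * E^2 * \<bar>h\<bar>" using False by (simp add: power2_eq_square)
  finally show ?thesis .
qed simp

lemma has_real_derivative_of_difference_quotient_le:
  fixes f :: "real \<Rightarrow> real"
  assumes "d > 0" and bound: "\<And>y. y \<noteq> x \<Longrightarrow> \<bar>y - x\<bar> < d \<Longrightarrow> \<bar>(f y - f x) / (y - x) - D\<bar> \<le> B * \<bar>y - x\<bar>"
  shows "(f has_real_derivative D) (at x)"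
  unfolding has_field_derivative_iff
proof (rule LIM_zero_cancel, rule Lim_null_comparison)
  show "\<forall>\<^sub>F y in at x. norm ((f y - f x) / (y - x) - D) \<le> B * \<bar>y - x\<bar>"
    unfolding eventually_at using bound \<open>d > 0\<close> by (auto simp: dist_real_def)
  show "((\<lambda>y. B * \<bar>y - x\<bar>) \<longlongrightarrow> 0) (at x)"
    by (auto intro!: tendsto_eq_intros)
qed

lemma has_real_derivative_reflect:
  assumes "(f has_real_derivative D) (at (- t) within {a..b})"
  shows "((\<lambda>t. f (- t)) has_real_derivative - D) (at t within {- b..- a})"
proof -
  have "(f has_real_derivative D) (at (- t) within uminus ` {- b..- a})" using assms by simp
  from DERIV_image_chain[OF this DERIV_minus[OF DERIV_ident]] show ?thesis by (simp add: o_def)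
qed

section \<open>The truncated Lienard system\<close>

text \<open>The derivative \<open>\<delta>'\<close> is needed only for the differentiability of the final radius.\<close>

locale damped_kepler =
  fixes \<delta> \<delta>' :: "real \<Rightarrow> real" and M T rB :: real
  assumes \<delta>_nonneg: "\<And>x. x > 0 \<Longrightarrow> 0 \<le> \<delta> x"
    and \<delta>_le: "\<And>x. x > 0 \<Longrightarrow> \<delta> x \<le> M"
    and \<delta>_deriv: "\<And>x. x > 0 \<Longrightarrow> (\<delta> has_real_derivative \<delta>' x) (at x)"
    and \<delta>'_cont: "continuous_on {0<..} \<delta>'"
    and T_pos: "T > 0"
    and rB_pos: "rB > 0"
begin

lemma M_nonneg: "M \<ge> 0"
  using \<delta>_nonneg[of 1] \<delta>_le[of 1] by simp

lemma \<delta>_cont: "continuous_on {0<..} \<delta>"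
  using \<delta>_deriv by (meson DERIV_isCont continuous_at_imp_continuous_on greaterThan_iff)

lemma \<delta>_lipschitz_on_Icc:
  assumes "e > 0"
  obtains L where "L \<ge> 0" "\<And>x y. x \<in> {e..K} \<Longrightarrow> y \<in> {e..K} \<Longrightarrow> \<bar>\<delta> x - \<delta> y\<bar> \<le> L * \<bar>x - y\<bar>"
proof -
  have "compact (\<delta>' ` {e..K})"
    by (rule compact_continuous_image[OF continuous_on_subset[OF \<delta>'_cont]]) (use assms in auto)
  then obtain B where B: "\<And>z. z \<in> {e..K} \<Longrightarrow> \<bar>\<delta>' z\<bar> \<le> B"
    by (metis compact_imp_bounded bounded_iff image_eqI real_norm_def)
  have "\<bar>\<delta> x - \<delta> y\<bar> \<le> max B 0 * \<bar>x - y\<bar>" if "x \<in> {e..K}" "y \<in> {e..K}" for x y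
  proof -
    have "norm (\<delta> x - \<delta> y) \<le> max B 0 * norm (x - y)"
    proof (rule field_differentiable_bound[where S = "{e..K}" and f' = \<delta>'])
      fix z assume "z \<in> {e..K}"
      then show "(\<delta> has_field_derivative \<delta>' z) (at z within {e..K})"
        using \<delta>_deriv[of z] assms by (auto intro: has_field_derivative_at_within)
      show "norm (\<delta>' z) \<le> max B 0" using B[OF \<open>z \<in> {e..K}\<close>] by simp
    qed (use that in auto)
    then show ?thesis by simp
  qed
  then show ?thesis by (intro that[of "max B 0"]) auto
qed

definition \<Delta> :: "real \<Rightarrow> real" where
  "\<Delta> = (SOME F. \<forall>x>0. (F has_real_derivative \<delta> x) (at x))"

lemma \<Delta>_deriv: "x > 0 \<Longrightarrow> (\<Delta> has_real_derivative \<delta> x) (at x)"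
proof -
  have "\<exists>F. \<forall>x::real. ereal 0 < ereal x \<longrightarrow> ereal x < \<infinity> \<longrightarrow> (F has_vector_derivative \<delta> x) (at x)"
    by (rule einterval_antiderivative) (use \<delta>_cont in \<open>auto simp: continuous_on_eq_continuous_at\<close>)
  then have "\<exists>F. \<forall>x>0. (F has_real_derivative \<delta> x) (at x)"
    by (auto simp: has_real_derivative_iff_has_vector_derivative)
  from someI_ex[OF this] show "x > 0 \<Longrightarrow> ?thesis" unfolding \<Delta>_def by blast
qed

lemma \<Delta>_cont: "continuous_on {0<..} \<Delta>"
  using \<Delta>_deriv by (meson DERIV_isCont continuous_at_imp_continuous_on greaterThan_iff)

lemma \<Delta>_mono:
  assumes "0 < x" "x \<le> y"
  shows "\<Delta> x \<le> \<Delta> y"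
proof (rule DERIV_nonneg_imp_nondecreasing[OF \<open>x \<le> y\<close>])
  fix z assume "x \<le> z" "z \<le> y"
  then have "z > 0" using assms by simp
  then show "\<exists>d. (\<Delta> has_real_derivative d) (at z) \<and> 0 \<le> d" using \<Delta>_deriv \<delta>_nonneg by blast
qed

lemma \<Delta>_lipschitz:
  assumes "0 < x" "0 < y"
  shows "\<bar>\<Delta> x - \<Delta> y\<bar> \<le> M * \<bar>x - y\<bar>"
proof -
  have "norm (\<Delta> x - \<Delta> y) \<le> M * norm (x - y)"
  proof (rule field_differentiable_bound[where S = "{min x y..max x y}" and f' = \<delta>])
    fix z assume "z \<in> {min x y..max x y}"
    then have "z > 0" using assms by auto
    then show "(\<Delta> has_field_derivative \<delta> z) (at z within {min x y..max x y})"
      by (auto intro: has_field_derivative_at_within \<Delta>_deriv)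
    show "norm (\<delta> z) \<le> M" using \<delta>_nonneg[OF \<open>z > 0\<close>] \<delta>_le[OF \<open>z > 0\<close>] by simp
  qed auto
  then show ?thesis by simp
qed

lemma \<Delta>_taylor:
  assumes "e > 0"
  obtains C where "C \<ge> 0"
    "\<And>a b. a \<in> {e..K} \<Longrightarrow> b \<in> {e..K} \<Longrightarrow> \<bar>\<Delta> b - \<Delta> a - \<delta> a * (b - a)\<bar> \<le> C * (b - a)^2"
proof -
  obtain L where "L \<ge> 0" and L: "\<And>x y. x \<in> {e..K} \<Longrightarrow> y \<in> {e..K} \<Longrightarrow> \<bar>\<delta> x - \<delta> y\<bar> \<le> L * \<bar>x - y\<bar>"
    using \<delta>_lipschitz_on_Icc[OF assms] by blast
  have "\<bar>\<Delta> b - \<Delta> a - \<delta> a * (b - a)\<bar> \<le> L * (b - a)^2" if ab: "a \<in> {e..K}" "b \<in> {e..K}" for a b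
  proof -
    let ?S = "{min a b..max a b}"
    have "norm ((\<Delta> b - \<delta> a * b) - (\<Delta> a - \<delta> a * a)) \<le> (L * \<bar>b - a\<bar>) * norm (b - a)"
    proof (rule field_differentiable_bound[where S = ?S and f = "\<lambda>z. \<Delta> z - \<delta> a * z"
          and f' = "\<lambda>z. \<delta> z - \<delta> a"])
      fix z assume z: "z \<in> ?S"
      then have "z \<in> {e..K}" "z > 0" using ab assms by auto
      have "((\<lambda>z. \<Delta> z - \<delta> a * z) has_real_derivative \<delta> z - \<delta> a) (at z)"
        using \<Delta>_deriv[OF \<open>z > 0\<close>] by (auto intro!: derivative_eq_intros)
      then show "((\<lambda>z. \<Delta> z - \<delta> a * z) has_real_derivative \<delta> z - \<delta> a) (at z within ?S)"
        by (rule has_field_derivative_at_within)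
      have "\<bar>\<delta> z - \<delta> a\<bar> \<le> L * \<bar>z - a\<bar>" using L \<open>z \<in> {e..K}\<close> ab by blast
      also have "\<dots> \<le> L * \<bar>b - a\<bar>" using z \<open>L \<ge> 0\<close> by (intro mult_left_mono) auto
      finally show "norm (\<delta> z - \<delta> a) \<le> L * \<bar>b - a\<bar>" by simp
    qed auto
    then show ?thesis by (simp add: power2_eq_square algebra_simps abs_mult)
  qed
  then show ?thesis by (rule that[OF \<open>L \<ge> 0\<close>])
qed

text \<open>States are \<open>(\<rho>, q)\<close> with \<open>q = \<rho>' - \<Delta> \<rho>\<close>, in forward time \<open>s = - t\<close>; below level \<open>\<epsilon>\<close>
  the radius is frozen, which makes the field globally Lipschitz.\<close>

definition trunc_field :: "real \<Rightarrow> real \<times> real \<Rightarrow> real \<times> real" where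
  "trunc_field \<epsilon> X = (snd X + \<Delta> (max (fst X) \<epsilon>), - 1 / (max (fst X) \<epsilon>)^2)"

definition trunc_lip :: "real \<Rightarrow> real" where
  "trunc_lip \<epsilon> = 1 + M + 2 / \<epsilon>^3"

lemma trunc_lip_pos: "\<epsilon> > 0 \<Longrightarrow> trunc_lip \<epsilon> > 0"
  using M_nonneg by (simp add: trunc_lip_def add_nonneg_pos)

lemma trunc_field_lipschitz:
  assumes "\<epsilon> > 0"
  shows "norm (trunc_field \<epsilon> X - trunc_field \<epsilon> Y) \<le> trunc_lip \<epsilon> * norm (X - Y)"
proof -
  define a where "a = max (fst X) \<epsilon>"
  define b where "b = max (fst Y) \<epsilon>"
  have ab: "a \<ge> \<epsilon>" "b \<ge> \<epsilon>" "\<bar>a - b\<bar> \<le> norm (X - Y)"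
    using abs_fst_le_norm[of "X - Y"] by (auto simp: a_def b_def max_def)
  have "trunc_field \<epsilon> X - trunc_field \<epsilon> Y = (snd X - snd Y + (\<Delta> a - \<Delta> b), 1 / b^2 - 1 / a^2)"
    by (simp add: trunc_field_def a_def b_def)
  then have "norm (trunc_field \<epsilon> X - trunc_field \<epsilon> Y)
      \<le> \<bar>snd X - snd Y + (\<Delta> a - \<Delta> b)\<bar> + \<bar>1 / b^2 - 1 / a^2\<bar>"
    by (metis norm_Pair_le real_norm_def)
  also have "\<dots> \<le> (norm (X - Y) + M * \<bar>a - b\<bar>) + 2 / \<epsilon>^3 * \<bar>b - a\<bar>"
    using \<Delta>_lipschitz[of a b] inverse_square_lipschitz[of \<epsilon> b a] abs_snd_le_norm[of "X - Y"] ab assms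
    by (intro add_mono abs_triangle_ineq[THEN order_trans]) auto
  also have "\<dots> \<le> (norm (X - Y) + M * norm (X - Y)) + 2 / \<epsilon>^3 * norm (X - Y)"
    using ab M_nonneg assms by (intro add_mono mult_left_mono) (auto simp: abs_minus_commute)
  finally show ?thesis by (simp add: trunc_lip_def algebra_simps)
qed

lemma trunc_field_cont: "\<epsilon> > 0 \<Longrightarrow> continuous_on UNIV (trunc_field \<epsilon>)"
  unfolding trunc_field_def by (intro continuous_intros continuous_on_compose2[OF \<Delta>_cont]) auto

definition trunc_solution :: "real \<Rightarrow> (real \<Rightarrow> real \<times> real) \<Rightarrow> bool" where
  "trunc_solution \<epsilon> x \<longleftrightarrow> (\<forall>t\<in>{0..T}. (x has_vector_derivative trunc_field \<epsilon> (x t)) (at t within {0..T}))"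

definition init_state :: "real \<Rightarrow> real \<times> real" where
  "init_state w = (rB, w - \<Delta> rB)"

definition trunc_sol :: "real \<Rightarrow> real \<Rightarrow> real \<Rightarrow> real \<times> real" where
  "trunc_sol \<epsilon> w = (SOME x. x 0 = init_state w \<and> trunc_solution \<epsilon> x)"

lemma trunc_sol:
  assumes "\<epsilon> > 0"
  shows "trunc_sol \<epsilon> w 0 = init_state w" and "trunc_solution \<epsilon> (trunc_sol \<epsilon> w)"
proof -
  have "continuous_on ({0..T} \<times> UNIV) (\<lambda>p. trunc_field \<epsilon> (snd p))"
    by (rule continuous_on_compose2[OF trunc_field_cont[OF assms] continuous_on_snd]) auto
  then have "\<exists>x. x 0 = init_state w \<and> trunc_solution \<epsilon> x"
    unfolding trunc_solution_def
    by (intro lipschitz_ode_solution_exists[where F = "\<lambda>t. trunc_field \<epsilon>" and L = "trunc_lip \<epsilon>"])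
      (use T_pos trunc_field_lipschitz[OF assms] trunc_lip_pos[OF assms] in \<open>auto simp: case_prod_beta'\<close>)
  from someI_ex[OF this] show "trunc_sol \<epsilon> w 0 = init_state w" "trunc_solution \<epsilon> (trunc_sol \<epsilon> w)"
    unfolding trunc_sol_def by auto
qed

lemma trunc_sol_fst_0: "\<epsilon> > 0 \<Longrightarrow> fst (trunc_sol \<epsilon> w 0) = rB"
  and trunc_sol_snd_0: "\<epsilon> > 0 \<Longrightarrow> snd (trunc_sol \<epsilon> w 0) = w - \<Delta> rB"
  using trunc_sol(1) by (auto simp: init_state_def)

lemma trunc_solution_derivs:
  assumes "trunc_solution \<epsilon> x" "t \<in> {0..T}"
  shows "((\<lambda>t. fst (x t)) has_real_derivative snd (x t) + \<Delta> (max (fst (x t)) \<epsilon>)) (at t within {0..T})"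
    and "((\<lambda>t. snd (x t)) has_real_derivative - 1 / (max (fst (x t)) \<epsilon>)^2) (at t within {0..T})"
  using assms has_real_derivative_fst has_real_derivative_snd
  by (fastforce simp: trunc_solution_def trunc_field_def)+

lemma trunc_solution_cont: "trunc_solution \<epsilon> x \<Longrightarrow> continuous_on {0..T} x"
  unfolding trunc_solution_def continuous_on_eq_continuous_within
  using has_vector_derivative_continuous by blast

lemma trunc_solution_dist:
  assumes "\<epsilon> > 0" "trunc_solution \<epsilon> x" "trunc_solution \<epsilon> y" "t \<in> {0..T}"
  shows "norm (x t - y t) \<le> norm (x 0 - y 0) * exp (trunc_lip \<epsilon> * t)"
proof -
  have "norm ((\<lambda>s. x s - y s) t)
      \<le> (norm ((\<lambda>s. x s - y s) 0) + 0 / trunc_lip \<epsilon>) * exp (trunc_lip \<epsilon> * t) - 0 / trunc_lip \<epsilon>"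
  proof (rule gronwall_affine[where e' = "\<lambda>s. trunc_field \<epsilon> (x s) - trunc_field \<epsilon> (y s)"])
    fix s assume "s \<in> {0..T}"
    then show "((\<lambda>s. x s - y s) has_vector_derivative trunc_field \<epsilon> (x s) - trunc_field \<epsilon> (y s))
        (at s within {0..T})"
      using assms(2,3) unfolding trunc_solution_def by (intro has_vector_derivative_diff) auto
    show "norm (trunc_field \<epsilon> (x s) - trunc_field \<epsilon> (y s)) \<le> trunc_lip \<epsilon> * norm (x s - y s) + 0"
      using trunc_field_lipschitz[OF assms(1)] by simp
  qed (use assms trunc_lip_pos in auto)
  then show ?thesis by simp
qed

lemma trunc_solution_unique:
  assumes "\<epsilon> > 0" "trunc_solution \<epsilon> x" "x 0 = init_state w" "t \<in> {0..T}"
  shows "x t = trunc_sol \<epsilon> w t"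
  using trunc_solution_dist[OF assms(1,2) trunc_sol(2)[OF assms(1), of w] assms(4)]
  by (simp add: assms(3) trunc_sol(1)[OF assms(1)])

text \<open>The system is cooperative (\<open>\<rho>'\<close> increases with \<open>q\<close>, \<open>q'\<close> with \<open>\<rho>\<close>), hence order preserving.\<close>

lemma trunc_solution_mono:
  assumes "\<epsilon> > 0" "trunc_solution \<epsilon> x" "trunc_solution \<epsilon> y"
    and "fst (x 0) = fst (y 0)" "snd (x 0) \<le> snd (y 0)" "t \<in> {0..T}"
  shows "fst (x t) \<le> fst (y t) \<and> snd (x t) \<le> snd (y t)"
proof -
  define mx where "mx s = max (fst (x s)) \<epsilon>" for s
  define my where "my s = max (fst (y s)) \<epsilon>" for s
  have "0 \<le> fst (y t) - fst (x t) \<and> 0 \<le> snd (y t) - snd (x t)"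
  proof (rule cooperative_system_nonneg[OF M_nonneg, where K = "2 / \<epsilon>^3"
        and a = "\<lambda>s. fst (y s) - fst (x s)" and b = "\<lambda>s. snd (y s) - snd (x s)"
        and D = "\<lambda>s. \<Delta> (my s) - \<Delta> (mx s)" and E = "\<lambda>s. 1 / (mx s)^2 - 1 / (my s)^2"])
    fix s assume s: "s \<in> {0..T}"
    show "((\<lambda>s. fst (y s) - fst (x s)) has_real_derivative
        (snd (y s) - snd (x s)) + (\<Delta> (my s) - \<Delta> (mx s))) (at s within {0..T})"
      using DERIV_diff[OF trunc_solution_derivs(1)[OF assms(3) s] trunc_solution_derivs(1)[OF assms(2) s]]
      by (simp add: mx_def my_def algebra_simps)
    show "((\<lambda>s. snd (y s) - snd (x s)) has_real_derivative 1 / (mx s)^2 - 1 / (my s)^2) (at s within {0..T})"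
      using DERIV_diff[OF trunc_solution_derivs(2)[OF assms(3) s] trunc_solution_derivs(2)[OF assms(2) s]]
      by (simp add: mx_def my_def)
    have m: "mx s \<ge> \<epsilon>" "my s \<ge> \<epsilon>" by (auto simp: mx_def my_def)
    show "M * (fst (y s) - fst (x s)) \<le> \<Delta> (my s) - \<Delta> (mx s)
        \<and> 2 / \<epsilon>^3 * (fst (y s) - fst (x s)) \<le> 1 / (mx s)^2 - 1 / (my s)^2"
      if "fst (y s) - fst (x s) < 0"
    proof -
      have le: "my s \<le> mx s" "mx s - my s \<le> - (fst (y s) - fst (x s))"
        using that by (auto simp: mx_def my_def)
      have "M * (fst (y s) - fst (x s)) \<le> - (M * (mx s - my s))"
        using mult_left_mono[OF le(2) M_nonneg] by (simp add: algebra_simps)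
      moreover have "2 / \<epsilon>^3 * (fst (y s) - fst (x s)) \<le> - (2 / \<epsilon>^3 * (mx s - my s))"
        using mult_left_mono[OF le(2), of "2 / \<epsilon>^3"] assms(1) by (simp add: field_simps)
      moreover have "- (M * (mx s - my s)) \<le> \<Delta> (my s) - \<Delta> (mx s)"
        using \<Delta>_lipschitz[of "mx s" "my s"] le m assms(1) by (simp add: abs_le_iff)
      moreover have "- (2 / \<epsilon>^3 * (mx s - my s)) \<le> 1 / (mx s)^2 - 1 / (my s)^2"
        using inverse_square_lipschitz[OF assms(1) m] le by (simp add: abs_le_iff)
      ultimately show ?thesis by linarith
    qed
    show "0 \<le> \<Delta> (my s) - \<Delta> (mx s) \<and> 0 \<le> 1 / (mx s)^2 - 1 / (my s)^2"
      if "0 \<le> fst (y s) - fst (x s)"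
    proof -
      have le: "mx s \<le> my s" using that by (auto simp: mx_def my_def)
      have "(mx s)^2 \<le> (my s)^2" using le m assms(1) by (intro power_mono) auto
      then have "1 / (my s)^2 \<le> 1 / (mx s)^2" using m assms(1) by (intro divide_left_mono) auto
      then show ?thesis using \<Delta>_mono[OF _ le] m assms(1) by simp
    qed
  qed (use assms in auto)
  then show ?thesis by simp
qed

section \<open>Admissible velocities\<close>

text \<open>Truncation at level \<open>\<epsilon>\<close> is invisible exactly when the radius stays above \<open>\<epsilon>\<close>.\<close>

definition stays_above :: "real \<Rightarrow> real \<Rightarrow> bool" where
  "stays_above \<epsilon> w \<longleftrightarrow> \<epsilon> > 0 \<and> (\<forall>t\<in>{0..T}. \<epsilon> \<le> fst (trunc_sol \<epsilon> w t))"

definition good_velocities :: "real set" where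
  "good_velocities = {w. \<exists>\<epsilon>. stays_above \<epsilon> w}"

lemma stays_above_pos: "stays_above \<epsilon> w \<Longrightarrow> \<epsilon> > 0"
  and stays_above_le: "stays_above \<epsilon> w \<Longrightarrow> t \<in> {0..T} \<Longrightarrow> \<epsilon> \<le> fst (trunc_sol \<epsilon> w t)"
  by (auto simp: stays_above_def)

lemma trunc_sol_eq_if_above:
  assumes "stays_above \<epsilon>1 w" "\<epsilon>2 > 0"
    and above: "\<And>t. t \<in> {0..T} \<Longrightarrow> \<epsilon>2 \<le> fst (trunc_sol \<epsilon>1 w t)"
    and "t \<in> {0..T}"
  shows "trunc_sol \<epsilon>2 w t = trunc_sol \<epsilon>1 w t"
proof -
  have \<epsilon>1: "\<epsilon>1 > 0" using assms(1) by (rule stays_above_pos)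
  have "trunc_field \<epsilon>2 (trunc_sol \<epsilon>1 w s) = trunc_field \<epsilon>1 (trunc_sol \<epsilon>1 w s)" if "s \<in> {0..T}" for s
    using above[OF that] stays_above_le[OF assms(1) that] by (simp add: trunc_field_def max_absorb1)
  then have "trunc_solution \<epsilon>2 (trunc_sol \<epsilon>1 w)"
    using trunc_sol(2)[OF \<epsilon>1] by (simp add: trunc_solution_def)
  from trunc_solution_unique[OF assms(2) this trunc_sol(1)[OF \<epsilon>1] assms(4)] show ?thesis by simp
qed

lemma stays_above_smaller:
  assumes "stays_above \<epsilon>1 w" "0 < \<epsilon>2" "\<epsilon>2 \<le> \<epsilon>1"
  shows "stays_above \<epsilon>2 w" and "\<And>t. t \<in> {0..T} \<Longrightarrow> trunc_sol \<epsilon>2 w t = trunc_sol \<epsilon>1 w t"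
proof -
  have above: "\<epsilon>2 \<le> fst (trunc_sol \<epsilon>1 w t)" if "t \<in> {0..T}" for t
    using stays_above_le[OF assms(1) that] assms(3) by linarith
  show eq: "\<And>t. t \<in> {0..T} \<Longrightarrow> trunc_sol \<epsilon>2 w t = trunc_sol \<epsilon>1 w t"
    by (rule trunc_sol_eq_if_above[OF assms(1,2) above])
  show "stays_above \<epsilon>2 w" using eq above assms(2) by (simp add: stays_above_def)
qed

lemma stays_above_trunc_sol_eq:
  assumes "stays_above \<epsilon>1 w" "stays_above \<epsilon>2 w" "t \<in> {0..T}"
  shows "trunc_sol \<epsilon>1 w t = trunc_sol \<epsilon>2 w t"
proof -
  have "0 < min \<epsilon>1 \<epsilon>2" using assms(1,2) stays_above_pos by auto
  then show ?thesis
    using stays_above_smaller(2)[OF assms(1), of "min \<epsilon>1 \<epsilon>2"] stays_above_smaller(2)[OF assms(2), of "min \<epsilon>1 \<epsilon>2"] assms(3)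
    by simp
qed

lemma stays_above_increasing:
  assumes "stays_above \<epsilon> w" "w \<le> w'"
  shows "stays_above \<epsilon> w'" and "fst (trunc_sol \<epsilon> w T) \<le> fst (trunc_sol \<epsilon> w' T)"
proof -
  have \<epsilon>: "\<epsilon> > 0" using assms(1) by (rule stays_above_pos)
  have le: "fst (trunc_sol \<epsilon> w t) \<le> fst (trunc_sol \<epsilon> w' t)" if "t \<in> {0..T}" for t
    using trunc_solution_mono[OF \<epsilon> trunc_sol(2)[OF \<epsilon>] trunc_sol(2)[OF \<epsilon>] _ _ that]
      trunc_sol_fst_0[OF \<epsilon>] trunc_sol_snd_0[OF \<epsilon>] assms(2) by simp
  show "stays_above \<epsilon> w'" using le assms(1) by (force simp: stays_above_def)
  show "fst (trunc_sol \<epsilon> w T) \<le> fst (trunc_sol \<epsilon> w' T)" using le T_pos by simp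
qed

text \<open>For \<open>w \<ge> T / rB\<^sup>2\<close> the radius never drops below \<open>rB\<close>, because \<open>q' \<ge> - 1 / rB\<^sup>2\<close> there.\<close>

lemma trunc_sol_lower_bound:
  assumes w: "w \<ge> T / rB^2" and t: "t \<in> {0..T}"
  shows "fst (trunc_sol rB w t) \<ge> rB + (w - T / rB^2) * t"
proof -
  define x where "x = trunc_sol rB w"
  have x: "trunc_solution rB x" using trunc_sol(2)[OF rB_pos] by (simp add: x_def)
  have x0: "fst (x 0) = rB" "snd (x 0) = w - \<Delta> rB"
    using trunc_sol_fst_0[OF rB_pos] trunc_sol_snd_0[OF rB_pos] by (auto simp: x_def)
  define m where "m s = max (fst (x s)) rB" for s
  have m: "m s \<ge> rB" for s by (simp add: m_def)
  define c where "c = 1 / rB^2"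
  have q: "snd (x s) \<ge> (w - \<Delta> rB) - s * c" if s: "s \<in> {0..T}" for s
  proof -
    have "(\<lambda>s. (w - \<Delta> rB) - s * c - snd (x s)) s \<le> (\<lambda>s. (w - \<Delta> rB) - s * c - snd (x s)) 0"
    proof (rule has_real_derivative_nonpos_imp_antimono[where f = "\<lambda>s. (w - \<Delta> rB) - s * c - snd (x s)"
          and f' = "\<lambda>s. - c + 1 / (m s)^2"])
      fix u assume u: "u \<in> {0..T}"
      show "((\<lambda>s. (w - \<Delta> rB) - s * c - snd (x s)) has_real_derivative - c + 1 / (m u)^2)
          (at u within {0..T})"
        using trunc_solution_derivs(2)[OF x u] unfolding m_def by (auto intro!: derivative_eq_intros)
      have "rB^2 \<le> (m u)^2" using m[of u] rB_pos by (intro power_mono) auto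
      then show "- c + 1 / (m u)^2 \<le> 0" using rB_pos by (simp add: c_def frac_le)
    qed (use s in auto)
    then show ?thesis using x0 by simp
  qed
  have "(\<lambda>s. rB + (w - T / rB^2) * s - fst (x s)) t \<le> (\<lambda>s. rB + (w - T / rB^2) * s - fst (x s)) 0"
  proof (rule has_real_derivative_nonpos_imp_antimono[where f = "\<lambda>s. rB + (w - T / rB^2) * s - fst (x s)"
        and f' = "\<lambda>s. (w - T / rB^2) - (snd (x s) + \<Delta> (m s))"])
    fix u assume u: "u \<in> {0..T}"
    show "((\<lambda>s. rB + (w - T / rB^2) * s - fst (x s)) has_real_derivative (w - T / rB^2) - (snd (x u) + \<Delta> (m u)))
        (at u within {0..T})"
      using trunc_solution_derivs(1)[OF x u] unfolding m_def by (auto intro!: derivative_eq_intros)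
    have "\<Delta> rB \<le> \<Delta> (m u)" using \<Delta>_mono[OF rB_pos m[of u]] .
    moreover have "u * c \<le> T / rB^2" using u by (simp add: c_def divide_right_mono)
    ultimately show "(w - T / rB^2) - (snd (x u) + \<Delta> (m u)) \<le> 0" using q[OF u] by linarith
  qed (use t in auto)
  then show ?thesis using x0 by (simp add: x_def)
qed

lemma stays_above_large:
  assumes "w \<ge> T / rB^2"
  shows "stays_above rB w"
proof -
  have "rB \<le> fst (trunc_sol rB w t)" if "t \<in> {0..T}" for t
  proof -
    have "0 \<le> (w - T / rB^2) * t" using assms that by simp
    then show ?thesis using trunc_sol_lower_bound[OF assms that] by linarith
  qed
  then show ?thesis using rB_pos by (simp add: stays_above_def)
qed

text \<open>For \<open>w \<le> 0\<close> the radius satisfies \<open>\<rho> s \<le> rB + w s\<close>, since \<open>q\<close> decreases and \<open>\<Delta>\<close> is \<open>M\<close>-Lipschitz.\<close>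

lemma good_velocities_lower:
  assumes "w \<in> good_velocities"
  shows "w > - rB / T"
proof (cases "w > 0")
  case True
  moreover have "- rB / T < 0" using T_pos rB_pos by simp
  ultimately show ?thesis by linarith
next
  case False
  obtain \<epsilon> where g: "stays_above \<epsilon> w" using assms by (auto simp: good_velocities_def)
  have \<epsilon>: "\<epsilon> > 0" using g by (rule stays_above_pos)
  define x where "x = trunc_sol \<epsilon> w"
  have x: "trunc_solution \<epsilon> x" using trunc_sol(2)[OF \<epsilon>] by (simp add: x_def)
  have x0: "fst (x 0) = rB" "snd (x 0) = w - \<Delta> rB"
    using trunc_sol_fst_0[OF \<epsilon>] trunc_sol_snd_0[OF \<epsilon>] by (auto simp: x_def)
  have above: "\<epsilon> \<le> fst (x s)" if "s \<in> {0..T}" for s using stays_above_le[OF g that] by (simp add: x_def)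
  have q: "snd (x s) \<le> w - \<Delta> rB" if "s \<in> {0..T}" for s
  proof -
    have "snd (x s) \<le> snd (x 0)"
      by (rule has_real_derivative_nonpos_imp_antimono[OF trunc_solution_derivs(2)[OF x]]) (use that in auto)
    then show ?thesis using x0 by simp
  qed
  have "fst (x T) - rB - w * T \<le> 0"
  proof (rule deriv_le_linear_imp_nonpos[where \<phi> = "\<lambda>s. fst (x s) - rB - w * s" and L = M])
    fix s assume s: "s \<in> {0..T}"
    show "((\<lambda>s. fst (x s) - rB - w * s) has_real_derivative snd (x s) + \<Delta> (fst (x s)) - w) (at s within {0..T})"
      using trunc_solution_derivs(1)[OF x s] above[OF s] by (auto intro!: derivative_eq_intros simp: max_absorb1)
    assume pos: "fst (x s) - rB - w * s > 0"
    have "w * s \<le> 0" using False s by (simp add: mult_nonpos_nonneg)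
    have "\<Delta> (fst (x s)) - \<Delta> rB \<le> M * max (fst (x s) - rB) 0"
    proof (cases "rB \<le> fst (x s)")
      case True
      then show ?thesis using \<Delta>_lipschitz[of "fst (x s)" rB] rB_pos by simp
    next
      case False
      then show ?thesis using \<Delta>_mono[of "fst (x s)" rB] above[OF s] \<epsilon> M_nonneg by simp
    qed
    also have "\<dots> \<le> M * (fst (x s) - rB - w * s)"
      using \<open>w * s \<le> 0\<close> pos M_nonneg by (intro mult_left_mono) auto
    finally show "snd (x s) + \<Delta> (fst (x s)) - w \<le> M * (fst (x s) - rB - w * s)"
      using q[OF s] by linarith
  qed (use x0 T_pos in auto)
  moreover have "\<epsilon> \<le> fst (x T)" using above T_pos by simp
  ultimately have "rB + w * T > 0" using \<epsilon> by linarith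
  then show ?thesis using T_pos by (simp add: field_simps)
qed

lemma trunc_sol_radius_dist:
  assumes "\<epsilon> > 0" "t \<in> {0..T}"
  shows "\<bar>fst (trunc_sol \<epsilon> w' t) - fst (trunc_sol \<epsilon> w t)\<bar> \<le> \<bar>w' - w\<bar> * exp (trunc_lip \<epsilon> * T)"
proof -
  have "\<bar>fst (trunc_sol \<epsilon> w' t) - fst (trunc_sol \<epsilon> w t)\<bar> \<le> norm (trunc_sol \<epsilon> w' t - trunc_sol \<epsilon> w t)"
    using abs_fst_le_norm[of "trunc_sol \<epsilon> w' t - trunc_sol \<epsilon> w t"] by simp
  also have "\<dots> \<le> norm (trunc_sol \<epsilon> w' 0 - trunc_sol \<epsilon> w 0) * exp (trunc_lip \<epsilon> * t)"
    using trunc_solution_dist[OF assms(1) trunc_sol(2)[OF assms(1)] trunc_sol(2)[OF assms(1)] assms(2)] .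
  also have "\<dots> = \<bar>w' - w\<bar> * exp (trunc_lip \<epsilon> * t)"
    using trunc_sol(1)[OF assms(1)] by (simp add: init_state_def)
  also have "\<dots> \<le> \<bar>w' - w\<bar> * exp (trunc_lip \<epsilon> * T)"
    using assms trunc_lip_pos[OF assms(1)] by (intro mult_left_mono) auto
  finally show ?thesis .
qed

lemma stays_above_nhd:
  assumes "stays_above \<epsilon> w"
  obtains h where "h > 0" "\<And>w'. \<bar>w' - w\<bar> < h \<Longrightarrow> stays_above (\<epsilon> / 2) w'"
proof -
  have "\<epsilon> > 0" using assms by (rule stays_above_pos)
  define E where "E = exp (trunc_lip (\<epsilon> / 2) * T)"
  have "E > 0" by (simp add: E_def)
  have "0 < \<epsilon> / 2" "\<epsilon> / 2 \<le> \<epsilon>" using \<open>\<epsilon> > 0\<close> by simp_all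
  note eq = stays_above_smaller(2)[OF assms this]
  have "\<epsilon> / 2 / E > 0" using \<open>\<epsilon> > 0\<close> \<open>E > 0\<close> by simp
  moreover have "stays_above (\<epsilon> / 2) w'" if "\<bar>w' - w\<bar> < \<epsilon> / 2 / E" for w'
  proof -
    have "\<epsilon> / 2 \<le> fst (trunc_sol (\<epsilon> / 2) w' t)" if t: "t \<in> {0..T}" for t
    proof -
      have "\<bar>fst (trunc_sol (\<epsilon> / 2) w' t) - fst (trunc_sol (\<epsilon> / 2) w t)\<bar> \<le> \<bar>w' - w\<bar> * E"
        using trunc_sol_radius_dist[of "\<epsilon> / 2" t w' w] \<open>\<epsilon> > 0\<close> t by (simp add: E_def)
      moreover have "\<bar>w' - w\<bar> * E < \<epsilon> / 2" using \<open>\<bar>w' - w\<bar> < \<epsilon> / 2 / E\<close> \<open>E > 0\<close> by (simp add: field_simps)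
      moreover have "fst (trunc_sol (\<epsilon> / 2) w t) = fst (trunc_sol \<epsilon> w t)" using eq[OF t] by simp
      ultimately show ?thesis using stays_above_le[OF assms t] by linarith
    qed
    then show ?thesis using \<open>\<epsilon> > 0\<close> by (simp add: stays_above_def)
  qed
  ultimately show ?thesis by (rule that)
qed

lemma good_velocities_increasing: "w \<in> good_velocities \<Longrightarrow> w \<le> w' \<Longrightarrow> w' \<in> good_velocities"
  using stays_above_increasing(1) by (auto simp: good_velocities_def)

text \<open>The threshold \<open>\<beta>\<close> of the theorem is \<open>- \<alpha>\<close>.\<close>

definition \<alpha> :: real where
  "\<alpha> = Inf good_velocities"

lemma good_velocities_eq: "good_velocities = {\<alpha><..}"
proof
  have bdd: "bdd_below good_velocities"
    using good_velocities_lower by (meson bdd_belowI less_imp_le)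
  show "good_velocities \<subseteq> {\<alpha><..}"
  proof
    fix w assume "w \<in> good_velocities"
    then obtain \<epsilon> where "stays_above \<epsilon> w" by (auto simp: good_velocities_def)
    then obtain h where "h > 0" "\<And>w'. \<bar>w' - w\<bar> < h \<Longrightarrow> stays_above (\<epsilon> / 2) w'"
      using stays_above_nhd by blast
    then have "stays_above (\<epsilon> / 2) (w - h / 2)" by simp
    then have "w - h / 2 \<in> good_velocities" by (auto simp: good_velocities_def)
    then have "\<alpha> \<le> w - h / 2" unfolding \<alpha>_def using bdd by (rule cInf_lower)
    then show "w \<in> {\<alpha><..}" using \<open>h > 0\<close> by simp
  qed
  show "{\<alpha><..} \<subseteq> good_velocities"
  proof
    fix w assume "w \<in> {\<alpha><..}"
    then have "Inf good_velocities < w" by (simp add: \<alpha>_def)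
    moreover have "T / rB^2 \<in> good_velocities"
      using stays_above_large[of "T / rB^2"] by (auto simp: good_velocities_def)
    ultimately obtain w0 where "w0 \<in> good_velocities" "w0 < w"
      using cInf_lessD[of good_velocities w] by blast
    then show "w \<in> good_velocities" using good_velocities_increasing by auto
  qed
qed

definition velocity :: "real \<Rightarrow> real \<Rightarrow> real \<Rightarrow> real" where
  "velocity \<epsilon> w t = snd (trunc_sol \<epsilon> w t) + \<Delta> (fst (trunc_sol \<epsilon> w t))"

lemma stays_above_derivs:
  assumes "stays_above \<epsilon> w" "t \<in> {0..T}"
  shows "((\<lambda>s. fst (trunc_sol \<epsilon> w s)) has_real_derivative velocity \<epsilon> w t) (at t within {0..T})"
    and "(velocity \<epsilon> w has_real_derivative
          - 1 / (fst (trunc_sol \<epsilon> w t))^2 + \<delta> (fst (trunc_sol \<epsilon> w t)) * velocity \<epsilon> w t) (at t within {0..T})"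
proof -
  have \<epsilon>: "\<epsilon> > 0" using assms(1) by (rule stays_above_pos)
  have x: "trunc_solution \<epsilon> (trunc_sol \<epsilon> w)" by (rule trunc_sol(2)[OF \<epsilon>])
  have above: "\<epsilon> \<le> fst (trunc_sol \<epsilon> w t)" by (rule stays_above_le[OF assms])
  show d1: "((\<lambda>s. fst (trunc_sol \<epsilon> w s)) has_real_derivative velocity \<epsilon> w t) (at t within {0..T})"
    using trunc_solution_derivs(1)[OF x assms(2)] above by (simp add: velocity_def max_absorb1)
  have "((\<lambda>s. \<Delta> (fst (trunc_sol \<epsilon> w s))) has_real_derivative \<delta> (fst (trunc_sol \<epsilon> w t)) * velocity \<epsilon> w t)
      (at t within {0..T})"
    by (rule DERIV_chain2[OF \<Delta>_deriv d1]) (use above \<epsilon> in simp)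
  from DERIV_add[OF trunc_solution_derivs(2)[OF x assms(2)] this]
  show "(velocity \<epsilon> w has_real_derivative
      - 1 / (fst (trunc_sol \<epsilon> w t))^2 + \<delta> (fst (trunc_sol \<epsilon> w t)) * velocity \<epsilon> w t) (at t within {0..T})"
    using above by (simp add: velocity_def[abs_def] max_absorb1)
qed

text \<open>Once \<open>\<rho>' < 0\<close>, both terms of \<open>\<rho>'' = \<delta> \<rho> \<rho>' - 1 / \<rho>\<^sup>2\<close> are negative.\<close>

lemma velocity_stays_negative:
  assumes "stays_above \<epsilon> w" "s1 \<in> {0..T}" "velocity \<epsilon> w s1 < 0" "t \<in> {s1..T}"
  shows "velocity \<epsilon> w t \<le> velocity \<epsilon> w s1"
proof -
  have "velocity \<epsilon> w t - velocity \<epsilon> w s1 \<le> 0"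
  proof (rule deriv_le_linear_imp_nonpos[where \<phi> = "\<lambda>s. velocity \<epsilon> w s - velocity \<epsilon> w s1"
        and a = s1 and b = T and L = M])
    fix s assume s: "s \<in> {s1..T}"
    then have s0: "s \<in> {0..T}" using assms(2) by auto
    let ?\<rho> = "fst (trunc_sol \<epsilon> w s)"
    show "((\<lambda>s. velocity \<epsilon> w s - velocity \<epsilon> w s1) has_real_derivative
        - 1 / ?\<rho>^2 + \<delta> ?\<rho> * velocity \<epsilon> w s) (at s within {s1..T})"
      using DERIV_subset[OF DERIV_diff[OF stays_above_derivs(2)[OF assms(1) s0] DERIV_const]] assms(2)
      by auto
    have "?\<rho> > 0" using stays_above_le[OF assms(1) s0] stays_above_pos[OF assms(1)] by linarith
    then have "0 \<le> \<delta> ?\<rho>" "\<delta> ?\<rho> \<le> M" by (auto intro: \<delta>_nonneg \<delta>_le)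
    assume pos: "velocity \<epsilon> w s - velocity \<epsilon> w s1 > 0"
    have "\<delta> ?\<rho> * velocity \<epsilon> w s1 \<le> 0"
      using \<open>0 \<le> \<delta> ?\<rho>\<close> assms(3) by (simp add: mult_nonneg_nonpos)
    moreover have "\<delta> ?\<rho> * (velocity \<epsilon> w s - velocity \<epsilon> w s1) \<le> M * (velocity \<epsilon> w s - velocity \<epsilon> w s1)"
      using \<open>\<delta> ?\<rho> \<le> M\<close> pos by (intro mult_right_mono) auto
    moreover have "- 1 / ?\<rho>^2 \<le> 0" by simp
    moreover have "\<delta> ?\<rho> * velocity \<epsilon> w s
        = \<delta> ?\<rho> * (velocity \<epsilon> w s - velocity \<epsilon> w s1) + \<delta> ?\<rho> * velocity \<epsilon> w s1"
      by (simp add: algebra_simps)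
    ultimately show "- 1 / ?\<rho>^2 + \<delta> ?\<rho> * velocity \<epsilon> w s \<le> M * (velocity \<epsilon> w s - velocity \<epsilon> w s1)"
      by linarith
  qed (use assms in auto)
  then show ?thesis by simp
qed

lemma radius_ge_min:
  assumes "stays_above \<epsilon> w" "s \<in> {0..T}"
  shows "min rB (fst (trunc_sol \<epsilon> w T)) \<le> fst (trunc_sol \<epsilon> w s)"
proof (cases "\<forall>t\<in>{0..s}. 0 \<le> velocity \<epsilon> w t")
  case True
  have "(\<lambda>t. - fst (trunc_sol \<epsilon> w t)) s \<le> (\<lambda>t. - fst (trunc_sol \<epsilon> w t)) 0"
  proof (rule has_real_derivative_nonpos_imp_antimono[where a = 0 and b = s
        and f = "\<lambda>t. - fst (trunc_sol \<epsilon> w t)" and f' = "\<lambda>t. - velocity \<epsilon> w t"])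
    fix r assume r: "r \<in> {0..s}"
    then have "r \<in> {0..T}" using assms(2) by auto
    show "((\<lambda>t. - fst (trunc_sol \<epsilon> w t)) has_real_derivative - velocity \<epsilon> w r) (at r within {0..s})"
      using DERIV_subset[OF DERIV_minus[OF stays_above_derivs(1)[OF assms(1) \<open>r \<in> {0..T}\<close>]]] assms(2)
      by auto
    show "- velocity \<epsilon> w r \<le> 0" using True r by auto
  qed (use assms(2) in auto)
  then show ?thesis using trunc_sol_fst_0[OF stays_above_pos[OF assms(1)]] by simp
next
  case False
  then obtain t where t: "t \<in> {0..s}" "velocity \<epsilon> w t < 0" by auto
  have "fst (trunc_sol \<epsilon> w T) \<le> fst (trunc_sol \<epsilon> w s)"
  proof (rule has_real_derivative_nonpos_imp_antimono[where a = s and b = T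
        and f = "\<lambda>t. fst (trunc_sol \<epsilon> w t)" and f' = "velocity \<epsilon> w"])
    fix r assume r: "r \<in> {s..T}"
    then have "r \<in> {0..T}" using assms(2) by auto
    show "((\<lambda>t. fst (trunc_sol \<epsilon> w t)) has_real_derivative velocity \<epsilon> w r) (at r within {s..T})"
      using DERIV_subset[OF stays_above_derivs(1)[OF assms(1) \<open>r \<in> {0..T}\<close>]] assms(2) by auto
    have "velocity \<epsilon> w r \<le> velocity \<epsilon> w t"
      by (rule velocity_stays_negative[OF assms(1) _ t(2)]) (use r t assms(2) in auto)
    then show "velocity \<epsilon> w r \<le> 0" using t(2) by simp
  qed (use assms(2) in auto)
  then show ?thesis by simp
qed

section \<open>The final radius\<close>

text \<open>All levels \<open>\<epsilon>\<close> with \<open>stays_above \<epsilon> w\<close> give the same solution, so the choice below is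
  immaterial on \<open>good_velocities\<close>; elsewhere the value is junk.\<close>

definition final_radius :: "real \<Rightarrow> real" where
  "final_radius w = fst (trunc_sol (SOME \<epsilon>. stays_above \<epsilon> w) w T)"

lemma final_radius_eq:
  assumes "stays_above \<epsilon> w"
  shows "final_radius w = fst (trunc_sol \<epsilon> w T)"
proof -
  have "stays_above (SOME \<epsilon>. stays_above \<epsilon> w) w" using assms by (rule someI)
  from stays_above_trunc_sol_eq[OF this assms] T_pos show ?thesis by (simp add: final_radius_def)
qed

lemma final_radius_pos: "w \<in> good_velocities \<Longrightarrow> 0 < final_radius w"
  using final_radius_eq stays_above_le stays_above_pos T_pos
  by (fastforce simp: good_velocities_def intro: less_le_trans)

lemma final_radius_mono: "w \<in> good_velocities \<Longrightarrow> w \<le> w' \<Longrightarrow> final_radius w \<le> final_radius w'"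
  using final_radius_eq stays_above_increasing by (fastforce simp: good_velocities_def)

lemma final_radius_lower_bound: "w \<ge> T / rB^2 \<Longrightarrow> final_radius w \<ge> rB + (w - T / rB^2) * T"
  using trunc_sol_lower_bound[of w T] final_radius_eq[OF stays_above_large] T_pos by simp

lemma final_radius_at_top: "filterlim final_radius at_top at_top"
proof (subst filterlim_at_top, intro allI)
  fix Z :: real
  show "eventually (\<lambda>w. Z \<le> final_radius w) at_top"
  proof (rule eventually_at_top_linorderI[of "max (T / rB^2) ((Z - rB) / T + T / rB^2)"])
    fix w assume w: "max (T / rB^2) ((Z - rB) / T + T / rB^2) \<le> w"
    then have "Z - rB \<le> (w - T / rB^2) * T" using T_pos by (simp add: field_simps)
    then show "Z \<le> final_radius w" using final_radius_lower_bound[of w] w by simp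
  qed
qed

text \<open>If the final radius stayed above \<open>c\<close>, then by \<open>radius_ge_min\<close> all radii would stay above
  \<open>min rB c\<close>, uniformly in \<open>w > \<alpha>\<close>; continuous dependence would then make \<open>\<alpha>\<close> itself good.\<close>

lemma final_radius_small:
  assumes "c > 0"
  shows "\<exists>w\<in>good_velocities. final_radius w < c"
proof (rule ccontr)
  assume "\<not> ?thesis"
  then have big: "c \<le> final_radius w" if "w \<in> good_velocities" for w using that by force
  define e where "e = min rB c / 2"
  have "e > 0" using assms rB_pos by (simp add: e_def)
  have lower: "2 * e \<le> fst (trunc_sol e w t)" if w: "w \<in> good_velocities" and t: "t \<in> {0..T}" for w t
  proof -
    obtain \<epsilon> where g: "stays_above \<epsilon> w" using w by (auto simp: good_velocities_def)
    have above: "2 * e \<le> fst (trunc_sol \<epsilon> w s)" if "s \<in> {0..T}" for s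
      using radius_ge_min[OF g that] final_radius_eq[OF g] big[OF w] by (simp add: e_def)
    have "trunc_sol e w t = trunc_sol \<epsilon> w t"
      by (rule trunc_sol_eq_if_above[OF g \<open>e > 0\<close> _ t]) (use above \<open>e > 0\<close> in force)
    then show ?thesis using above[OF t] by simp
  qed
  define E where "E = exp (trunc_lip e * T)"
  have "E > 0" by (simp add: E_def)
  define w where "w = \<alpha> + e / E / 2"
  have "w \<in> good_velocities" using good_velocities_eq \<open>e > 0\<close> \<open>E > 0\<close> by (simp add: w_def)
  have "e \<le> fst (trunc_sol e \<alpha> t)" if t: "t \<in> {0..T}" for t
  proof -
    have "\<bar>fst (trunc_sol e \<alpha> t) - fst (trunc_sol e w t)\<bar> \<le> \<bar>\<alpha> - w\<bar> * E"
      using trunc_sol_radius_dist[OF \<open>e > 0\<close> t, of \<alpha> w] by (simp add: E_def)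
    also have "\<dots> = e / 2" using \<open>E > 0\<close> \<open>e > 0\<close> by (simp add: w_def)
    finally show ?thesis using lower[OF \<open>w \<in> good_velocities\<close> t] by linarith
  qed
  then have "\<alpha> \<in> good_velocities" using \<open>e > 0\<close> by (auto simp: good_velocities_def stays_above_def)
  then show False using good_velocities_eq by simp
qed

lemma final_radius_at_alpha: "(final_radius \<longlongrightarrow> 0) (at_right \<alpha>)"
proof (rule tendstoI)
  fix c :: real assume "c > 0"
  obtain w0 where w0: "w0 \<in> good_velocities" "final_radius w0 < c"
    using final_radius_small[OF \<open>c > 0\<close>] by blast
  then have "\<alpha> < w0" using good_velocities_eq by auto
  show "eventually (\<lambda>w. dist (final_radius w) 0 < c) (at_right \<alpha>)"
    unfolding eventually_at_right[OF \<open>\<alpha> < w0\<close>]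
  proof (intro exI[of _ w0] conjI allI impI \<open>\<alpha> < w0\<close>)
    fix w assume w: "\<alpha> < w" "w < w0"
    then have "w \<in> good_velocities" using good_velocities_eq by simp
    then show "dist (final_radius w) 0 < c"
      using final_radius_pos[of w] final_radius_mono[of w w0] w w0 by simp
  qed
qed

section \<open>Differentiability of the final radius\<close>

text \<open>The linearisation of the Lienard system along \<open>trunc_sol \<epsilon> w\<close>; its solution with
  \<open>Z 0 = (0, 1)\<close> is the derivative of the state with respect to \<open>w\<close>.\<close>

definition variational_field :: "real \<Rightarrow> real \<Rightarrow> real \<Rightarrow> real \<times> real \<Rightarrow> real \<times> real" where
  "variational_field \<epsilon> w t Z =
     (\<delta> (fst (trunc_sol \<epsilon> w t)) * fst Z + snd Z, 2 * fst Z / (fst (trunc_sol \<epsilon> w t))^3)"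

lemma variational_field_cont:
  assumes "stays_above \<epsilon> w"
  shows "continuous_on ({0..T} \<times> UNIV) (\<lambda>(t, Z). variational_field \<epsilon> w t Z)"
proof -
  have "\<epsilon> > 0" using assms by (rule stays_above_pos)
  define \<rho> where "\<rho> t = fst (trunc_sol \<epsilon> w t)" for t
  have \<rho>_ge: "\<epsilon> \<le> \<rho> t" if "t \<in> {0..T}" for t using stays_above_le[OF assms that] by (simp add: \<rho>_def)
  have \<rho>_cont: "continuous_on {0..T} \<rho>"
    unfolding \<rho>_def using trunc_solution_cont[OF trunc_sol(2)[OF \<open>\<epsilon> > 0\<close>]] by (intro continuous_intros)
  have "continuous_on {0..T} (\<lambda>t. \<delta> (\<rho> t))"
    by (rule continuous_on_compose2[OF \<delta>_cont \<rho>_cont]) (use \<rho>_ge \<open>\<epsilon> > 0\<close> in force)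
  then have c1: "continuous_on ({0..T} \<times> UNIV) (\<lambda>p::real \<times> (real \<times> real). \<delta> (\<rho> (fst p)))"
    by (rule continuous_on_compose2[OF _ continuous_on_fst]) auto
  have c2: "continuous_on ({0..T} \<times> UNIV) (\<lambda>p::real \<times> (real \<times> real). \<rho> (fst p))"
    by (rule continuous_on_compose2[OF \<rho>_cont continuous_on_fst]) auto
  have "continuous_on ({0..T} \<times> UNIV) (\<lambda>p::real \<times> (real \<times> real).
      (\<delta> (\<rho> (fst p)) * fst (snd p) + snd (snd p), 2 * fst (snd p) / (\<rho> (fst p))^3))"
    using c1 c2 \<rho>_ge \<open>\<epsilon> > 0\<close> by (intro continuous_intros) force+
  then show ?thesis by (simp add: variational_field_def \<rho>_def case_prod_beta')
qed

lemma variational_field_lipschitz: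
  assumes "stays_above \<epsilon> w" "t \<in> {0..T}"
  shows "norm (variational_field \<epsilon> w t P - variational_field \<epsilon> w t Q) \<le> trunc_lip \<epsilon> * norm (P - Q)"
proof -
  let ?\<rho> = "fst (trunc_sol \<epsilon> w t)"
  have "\<epsilon> > 0" "\<epsilon> \<le> ?\<rho>" using stays_above_pos[OF assms(1)] stays_above_le[OF assms] by simp_all
  moreover from this have "?\<rho> > 0" by linarith
  ultimately have "0 \<le> \<delta> ?\<rho>" "\<delta> ?\<rho> \<le> M" "2 / ?\<rho>^3 \<le> 2 / \<epsilon>^3"
    by (auto intro!: \<delta>_nonneg \<delta>_le divide_left_mono power_mono)
  have "variational_field \<epsilon> w t P - variational_field \<epsilon> w t Q
      = (snd (P - Q) + \<delta> ?\<rho> * fst (P - Q) + 0, 2 / ?\<rho>^3 * fst (P - Q) + 0)"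
    by (simp add: variational_field_def algebra_simps diff_divide_distrib)
  also have "norm \<dots> \<le> (1 + M + 2 / \<epsilon>^3) * norm (fst (P - Q), snd (P - Q)) + \<bar>0\<bar> + \<bar>0\<bar>"
    by (rule norm_Pair_linear_le) (use \<open>0 \<le> \<delta> ?\<rho>\<close> \<open>\<delta> ?\<rho> \<le> M\<close> \<open>2 / ?\<rho>^3 \<le> 2 / \<epsilon>^3\<close> \<open>?\<rho> > 0\<close> in auto)
  finally show ?thesis by (simp only: prod.collapse abs_zero add_0_right trunc_lip_def)
qed

lemma variational_solution_exists:
  assumes "stays_above \<epsilon> w"
  obtains Z where "Z 0 = (0, 1)"
    "\<And>t. t \<in> {0..T} \<Longrightarrow> (Z has_vector_derivative variational_field \<epsilon> w t (Z t)) (at t within {0..T})"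
  using lipschitz_ode_solution_exists[OF _ variational_field_cont[OF assms] variational_field_lipschitz[OF assms]]
    T_pos trunc_lip_pos[OF stays_above_pos[OF assms]] that by force

lemma variational_derivs:
  assumes Z: "\<And>t. t \<in> {0..T} \<Longrightarrow> (Z has_vector_derivative variational_field \<epsilon> w t (Z t)) (at t within {0..T})"
    and "t \<in> {0..T}"
  shows "((\<lambda>t. fst (Z t)) has_real_derivative snd (Z t) + \<delta> (fst (trunc_sol \<epsilon> w t)) * fst (Z t))
      (at t within {0..T})"
    and "((\<lambda>t. snd (Z t)) has_real_derivative 2 / (fst (trunc_sol \<epsilon> w t))^3 * fst (Z t)) (at t within {0..T})"
  using has_real_derivative_fst[OF Z[OF assms(2)]] has_real_derivative_snd[OF Z[OF assms(2)]]
  by (simp_all add: variational_field_def add.commute)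

text \<open>The variational system is again cooperative.\<close>

lemma variational_nonneg:
  assumes "stays_above \<epsilon> w" "Z 0 = (0, 1)"
    and Z: "\<And>t. t \<in> {0..T} \<Longrightarrow> (Z has_vector_derivative variational_field \<epsilon> w t (Z t)) (at t within {0..T})"
    and "t \<in> {0..T}"
  shows "0 \<le> fst (Z t) \<and> 0 \<le> snd (Z t)"
proof (rule cooperative_system_nonneg[OF M_nonneg, where K = "2 / \<epsilon>^3"
      and a = "\<lambda>t. fst (Z t)" and b = "\<lambda>t. snd (Z t)" and D = "\<lambda>t. \<delta> (fst (trunc_sol \<epsilon> w t)) * fst (Z t)"
      and E = "\<lambda>t. 2 / (fst (trunc_sol \<epsilon> w t))^3 * fst (Z t)"])
  fix s assume s: "s \<in> {0..T}"
  show "((\<lambda>t. fst (Z t)) has_real_derivative snd (Z s) + \<delta> (fst (trunc_sol \<epsilon> w s)) * fst (Z s))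
      (at s within {0..T})"
    "((\<lambda>t. snd (Z t)) has_real_derivative 2 / (fst (trunc_sol \<epsilon> w s))^3 * fst (Z s)) (at s within {0..T})"
    using variational_derivs[OF Z s] by simp_all
  let ?\<rho> = "fst (trunc_sol \<epsilon> w s)"
  have "\<epsilon> > 0" "\<epsilon> \<le> ?\<rho>" using stays_above_pos[OF assms(1)] stays_above_le[OF assms(1) s] by simp_all
  moreover from this have "?\<rho> > 0" by linarith
  ultimately have \<delta>: "0 \<le> \<delta> ?\<rho>" "\<delta> ?\<rho> \<le> M" and k: "2 / ?\<rho>^3 \<le> 2 / \<epsilon>^3" "0 \<le> 2 / ?\<rho>^3"
    by (auto intro!: \<delta>_nonneg \<delta>_le divide_left_mono power_mono)
  show "M * fst (Z s) \<le> \<delta> ?\<rho> * fst (Z s) \<and> 2 / \<epsilon>^3 * fst (Z s) \<le> 2 / ?\<rho>^3 * fst (Z s)"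
    if "fst (Z s) < 0"
    using mult_right_mono_neg[OF \<delta>(2), of "fst (Z s)"] mult_right_mono_neg[OF k(1), of "fst (Z s)"] that
    by simp
  show "0 \<le> \<delta> ?\<rho> * fst (Z s) \<and> 0 \<le> 2 / ?\<rho>^3 * fst (Z s)" if "0 \<le> fst (Z s)"
    using \<delta> k that by simp
qed (use assms stays_above_pos[OF assms(1)] in auto)

text \<open>Since \<open>fst Z, snd Z \<ge> 0\<close>, first \<open>snd Z \<ge> 1\<close> and then \<open>fst Z' \<ge> 1\<close>.\<close>

lemma variational_lower_bound:
  assumes "stays_above \<epsilon> w" "Z 0 = (0, 1)"
    and Z: "\<And>t. t \<in> {0..T} \<Longrightarrow> (Z has_vector_derivative variational_field \<epsilon> w t (Z t)) (at t within {0..T})"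
  shows "T \<le> fst (Z T)"
proof -
  have \<rho>_pos: "0 < fst (trunc_sol \<epsilon> w t)" if "t \<in> {0..T}" for t
    using stays_above_pos[OF assms(1)] stays_above_le[OF assms(1) that] by linarith
  have nonneg: "0 \<le> fst (Z t) \<and> 0 \<le> snd (Z t)" if "t \<in> {0..T}" for t
    by (rule variational_nonneg[where Z = Z, OF assms(1,2) Z that])
  have \<zeta>_ge: "1 \<le> snd (Z t)" if "t \<in> {0..T}" for t
  proof -
    have "- snd (Z t) \<le> - snd (Z 0)"
    proof (rule has_real_derivative_nonpos_imp_antimono[where f = "\<lambda>t. - snd (Z t)" and a = 0 and b = T])
      fix s assume s: "s \<in> {0..T}"
      show "((\<lambda>t. - snd (Z t)) has_real_derivative - (2 / (fst (trunc_sol \<epsilon> w s))^3 * fst (Z s)))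
          (at s within {0..T})"
        using variational_derivs(2)[OF Z s] by (rule DERIV_minus)
      show "- (2 / (fst (trunc_sol \<epsilon> w s))^3 * fst (Z s)) \<le> 0" using nonneg[OF s] \<rho>_pos[OF s] by simp
    qed (use that in auto)
    then show ?thesis using assms(2) by simp
  qed
  have "T - fst (Z T) \<le> 0 - fst (Z 0)"
  proof (rule has_real_derivative_nonpos_imp_antimono[where f = "\<lambda>t. t - fst (Z t)" and a = 0 and b = T])
    fix s assume s: "s \<in> {0..T}"
    show "((\<lambda>t. t - fst (Z t)) has_real_derivative 1 - (snd (Z s) + \<delta> (fst (trunc_sol \<epsilon> w s)) * fst (Z s)))
        (at s within {0..T})"
      using variational_derivs(1)[OF Z s] by (auto intro!: derivative_eq_intros)
    have "0 \<le> \<delta> (fst (trunc_sol \<epsilon> w s)) * fst (Z s)" using nonneg[OF s] \<rho>_pos[OF s] \<delta>_nonneg by simp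
    then show "1 - (snd (Z s) + \<delta> (fst (trunc_sol \<epsilon> w s)) * fst (Z s)) \<le> 0" using \<zeta>_ge[OF s] by simp
  qed (use T_pos in auto)
  then show ?thesis using assms(2) by simp
qed

lemma trunc_field_linearization:
  assumes "e > 0" "h \<noteq> 0" "C \<ge> 0"
    and X: "fst X \<in> {e..K}" and Y: "fst Y \<in> {e..K}" and close: "\<bar>fst Y - fst X\<bar> \<le> \<bar>h\<bar> * E"
    and taylor: "\<bar>\<Delta> (fst Y) - \<Delta> (fst X) - \<delta> (fst X) * (fst Y - fst X)\<bar> \<le> C * (fst Y - fst X)^2"
  shows "norm ((1 / h) *\<^sub>R (trunc_field e Y - trunc_field e X) - (\<delta> (fst X) * fst Z + snd Z, 2 * fst Z / (fst X)^3))
    \<le> trunc_lip e * norm ((1 / h) *\<^sub>R (Y - X) - Z) + (C + 3 * K / e^5) * E^2 * \<bar>h\<bar>"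
proof -
  define a a1 where "a = fst X" and "a1 = fst Y"
  define u v where "u = (a1 - a) / h - fst Z" and "v = (snd Y - snd X) / h - snd Z"
  define R1 where "R1 = \<Delta> a1 - \<Delta> a - \<delta> a * (a1 - a)"
  define R2 where "R2 = 1 / a^2 - 1 / a1^2 - 2 * (a1 - a) / a^3"
  have a: "e \<le> a" "a \<le> K" "e \<le> a1" "a1 \<le> K" "0 < a" using X Y \<open>e > 0\<close> by (auto simp: a_def a1_def)
  have \<delta>: "0 \<le> \<delta> a" "\<delta> a \<le> M" using a by (auto intro: \<delta>_nonneg \<delta>_le)
  have "\<bar>a1 - a\<bar>^2 \<le> (\<bar>h\<bar> * E)^2"
    using close by (intro power_mono) (simp_all add: a_def a1_def)
  then have sq: "(a1 - a)^2 \<le> (\<bar>h\<bar> * E)^2" by simp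
  have R1: "\<bar>R1 / h\<bar> \<le> C * E^2 * \<bar>h\<bar>"
  proof (rule abs_divide_le_of_le_square)
    show "\<bar>R1\<bar> \<le> C * (\<bar>h\<bar> * E)^2"
      using taylor mult_left_mono[OF sq \<open>C \<ge> 0\<close>] by (simp add: R1_def a_def a1_def)
  qed
  have R2: "\<bar>R2 / h\<bar> \<le> 3 * K / e^5 * E^2 * \<bar>h\<bar>"
  proof (rule abs_divide_le_of_le_square)
    have "\<bar>R2\<bar> \<le> 3 * K / e^5 * (a1 - a)^2"
      unfolding R2_def using inverse_square_taylor[OF \<open>e > 0\<close>] a by simp
    also have "\<dots> \<le> 3 * K / e^5 * (\<bar>h\<bar> * E)^2"
      using sq a \<open>e > 0\<close> by (intro mult_left_mono) auto
    finally show "\<bar>R2\<bar> \<le> 3 * K / e^5 * (\<bar>h\<bar> * E)^2" .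
  qed
  have "(1 / h) *\<^sub>R (trunc_field e Y - trunc_field e X) - (\<delta> (fst X) * fst Z + snd Z, 2 * fst Z / (fst X)^3)
      = (v + \<delta> a * u + R1 / h, 2 / a^3 * u + R2 / h)"
    using a \<open>h \<noteq> 0\<close> unfolding prod_eq_iff
    by (simp add: trunc_field_def a_def[symmetric] a1_def[symmetric] max_absorb1 u_def v_def R1_def R2_def)
      (simp add: field_simps)
  also have "norm \<dots> \<le> (1 + M + 2 / e^3) * norm (u, v) + \<bar>R1 / h\<bar> + \<bar>R2 / h\<bar>"
    by (rule norm_Pair_linear_le)
      (use \<delta> a \<open>e > 0\<close> in \<open>auto intro!: divide_left_mono power_mono mult_pos_pos\<close>)
  also have "\<dots> \<le> trunc_lip e * norm (u, v) + (C + 3 * K / e^5) * E^2 * \<bar>h\<bar>"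
    using R1 R2 by (simp add: trunc_lip_def distrib_right)
  also have "(u, v) = (1 / h) *\<^sub>R (Y - X) - Z"
    by (simp add: u_def v_def a_def a1_def prod_eq_iff divide_inverse mult.commute)
  finally show ?thesis by simp
qed

text \<open>The difference quotient of the state minus \<open>Z\<close> obeys the linearised equation up to an
  \<open>O(h)\<close> defect, so Gronwall makes it \<open>O(h)\<close>.\<close>

lemma final_radius_difference_quotient:
  assumes g: "stays_above e w" and gh: "stays_above e (w + h)" and "h \<noteq> 0" "C \<ge> 0"
    and Z0: "Z 0 = (0, 1)"
    and Z: "\<And>t. t \<in> {0..T} \<Longrightarrow> (Z has_vector_derivative variational_field e w t (Z t)) (at t within {0..T})"
    and le_K: "\<And>t. t \<in> {0..T} \<Longrightarrow> fst (trunc_sol e w t) \<le> K"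
      "\<And>t. t \<in> {0..T} \<Longrightarrow> fst (trunc_sol e (w + h) t) \<le> K"
    and taylor: "\<And>a b. a \<in> {e..K} \<Longrightarrow> b \<in> {e..K} \<Longrightarrow> \<bar>\<Delta> b - \<Delta> a - \<delta> a * (b - a)\<bar> \<le> C * (b - a)^2"
  shows "\<bar>(final_radius (w + h) - final_radius w) / h - fst (Z T)\<bar>
    \<le> (C + 3 * K / e^5) * exp (trunc_lip e * T)^3 / trunc_lip e * \<bar>h\<bar>"
proof -
  have "e > 0" using g by (rule stays_above_pos)
  define L where "L = trunc_lip e"
  define E where "E = exp (L * T)"
  define c where "c = (C + 3 * K / e^5) * E^2 * \<bar>h\<bar>"
  have "L > 0" using trunc_lip_pos[OF \<open>e > 0\<close>] by (simp add: L_def)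
  have "c \<ge> 0" using \<open>C \<ge> 0\<close> \<open>e > 0\<close> le_K(1)[of 0] stays_above_le[OF g, of 0] T_pos by (simp add: c_def)
  define X Y where "X = trunc_sol e w" and "Y = trunc_sol e (w + h)"
  define D where "D t = (1 / h) *\<^sub>R (Y t - X t) - Z t" for t
  have "norm (D T) \<le> (norm (D 0) + c / L) * exp (L * T) - c / L"
  proof (rule gronwall_affine[OF _ _ \<open>L > 0\<close> \<open>c \<ge> 0\<close>])
    fix t assume t: "t \<in> {0..T}"
    show "(D has_vector_derivative
        (1 / h) *\<^sub>R (trunc_field e (Y t) - trunc_field e (X t)) - variational_field e w t (Z t)) (at t within {0..T})"
      using trunc_sol(2)[OF \<open>e > 0\<close>, of w] trunc_sol(2)[OF \<open>e > 0\<close>, of "w + h"] Z[OF t] t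
      unfolding D_def[abs_def] X_def Y_def trunc_solution_def by (auto intro!: derivative_eq_intros)
    have "fst (X t) \<in> {e..K}" "fst (Y t) \<in> {e..K}"
      using stays_above_le[OF g t] stays_above_le[OF gh t] le_K[OF t] by (simp_all add: X_def Y_def)
    moreover have "\<bar>fst (Y t) - fst (X t)\<bar> \<le> \<bar>h\<bar> * E"
      using trunc_sol_radius_dist[OF \<open>e > 0\<close> t, of "w + h" w] by (simp add: X_def Y_def E_def L_def)
    ultimately show "norm ((1 / h) *\<^sub>R (trunc_field e (Y t) - trunc_field e (X t)) - variational_field e w t (Z t))
        \<le> L * norm (D t) + c"
      using trunc_field_linearization[OF \<open>e > 0\<close> \<open>h \<noteq> 0\<close> \<open>C \<ge> 0\<close>, of "X t" K "Y t" E "Z t"] taylor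
      by (simp add: variational_field_def X_def D_def L_def c_def)
  qed (use T_pos in auto)
  also have "D 0 = 0"
    using trunc_sol(1)[OF \<open>e > 0\<close>] Z0 \<open>h \<noteq> 0\<close> by (simp add: D_def X_def Y_def init_state_def)
  finally have "norm (D T) \<le> c / L * (E - 1)" by (simp add: E_def algebra_simps)
  also have "\<dots> \<le> c / L * E" using \<open>c \<ge> 0\<close> \<open>L > 0\<close> by (intro mult_left_mono) auto
  finally have "\<bar>fst (D T)\<bar> \<le> c / L * E" using abs_fst_le_norm[of "D T"] by linarith
  moreover have "fst (D T) = (final_radius (w + h) - final_radius w) / h - fst (Z T)"
    using final_radius_eq[OF g] final_radius_eq[OF gh] by (simp add: D_def X_def Y_def divide_inverse mult.commute)
  ultimately show ?thesis by (simp add: c_def E_def L_def power3_eq_cube power2_eq_square mult_ac)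
qed

lemma final_radius_has_derivative:
  assumes "w \<in> good_velocities"
  obtains D where "D > 0" "(final_radius has_real_derivative D) (at w)"
proof -
  obtain \<epsilon> where "stays_above \<epsilon> w" using assms by (auto simp: good_velocities_def)
  then obtain h0 where "h0 > 0" and near: "\<And>w'. \<bar>w' - w\<bar> < h0 \<Longrightarrow> stays_above (\<epsilon> / 2) w'"
    using stays_above_nhd by blast
  define e where "e = \<epsilon> / 2"
  have g: "stays_above e w" using near[of w] \<open>h0 > 0\<close> by (simp add: e_def)
  have "e > 0" using g by (rule stays_above_pos)
  obtain Z where Z0: "Z 0 = (0, 1)"
    and Z: "\<And>t. t \<in> {0..T} \<Longrightarrow> (Z has_vector_derivative variational_field e w t (Z t)) (at t within {0..T})"
    using variational_solution_exists[OF g] by blast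
  have "fst (Z T) > 0" using variational_lower_bound[OF g Z0 Z] T_pos by simp
  have cont: "continuous_on {0..T} (\<lambda>t. fst (trunc_sol e w t))"
    using trunc_solution_cont[OF trunc_sol(2)[OF \<open>e > 0\<close>]] by (intro continuous_intros)
  obtain tmax where tmax: "\<And>t. t \<in> {0..T} \<Longrightarrow> fst (trunc_sol e w t) \<le> fst (trunc_sol e w tmax)"
    using continuous_attains_sup[OF compact_Icc _ cont] T_pos by fastforce
  define K where "K = fst (trunc_sol e w tmax) + 1"
  have le_K: "fst (trunc_sol e w t) \<le> K" if "t \<in> {0..T}" for t using tmax[OF that] by (simp add: K_def)
  define E where "E = exp (trunc_lip e * T)"
  have "E > 0" by (simp add: E_def)
  obtain C where "C \<ge> 0"
    and taylor: "\<And>a b. a \<in> {e..K} \<Longrightarrow> b \<in> {e..K} \<Longrightarrow> \<bar>\<Delta> b - \<Delta> a - \<delta> a * (b - a)\<bar> \<le> C * (b - a)^2"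
    using \<Delta>_taylor[OF \<open>e > 0\<close>] by blast
  define B where "B = (C + 3 * K / e^5) * E^3 / trunc_lip e"
  have bound: "\<bar>(final_radius y - final_radius w) / (y - w) - fst (Z T)\<bar> \<le> B * \<bar>y - w\<bar>"
    if "y \<noteq> w" "\<bar>y - w\<bar> < min h0 (1 / E)" for y
  proof -
    have gy: "stays_above e (w + (y - w))" using near[of y] that by (simp add: e_def)
    have "fst (trunc_sol e (w + (y - w)) t) \<le> K" if t: "t \<in> {0..T}" for t
    proof -
      have "\<bar>fst (trunc_sol e y t) - fst (trunc_sol e w t)\<bar> \<le> \<bar>y - w\<bar> * E"
        using trunc_sol_radius_dist[OF \<open>e > 0\<close> t] by (simp add: E_def)
      moreover have "\<bar>y - w\<bar> * E \<le> 1" using \<open>\<bar>y - w\<bar> < min h0 (1 / E)\<close> \<open>E > 0\<close> by (simp add: field_simps)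
      ultimately show ?thesis using tmax[OF t] by (simp add: K_def)
    qed
    from final_radius_difference_quotient[OF g gy _ \<open>C \<ge> 0\<close> Z0 Z le_K this taylor] that
    show ?thesis by (simp add: B_def E_def)
  qed
  have "(final_radius has_real_derivative fst (Z T)) (at w)"
    by (rule has_real_derivative_of_difference_quotient_le[where d = "min h0 (1 / E)", OF _ bound])
      (use \<open>h0 > 0\<close> \<open>E > 0\<close> in simp_all)
  with \<open>fst (Z T) > 0\<close> show ?thesis by (rule that)
qed

lemma final_radius_image: "final_radius ` good_velocities = {0<..}"
proof
  show "final_radius ` good_velocities \<subseteq> {0<..}" using final_radius_pos by auto
  show "{0<..} \<subseteq> final_radius ` good_velocities"
  proof
    fix y :: real assume "y \<in> {0<..}"
    then obtain w1 where w1: "w1 \<in> good_velocities" "final_radius w1 < y"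
      using final_radius_small by auto
    have "eventually (\<lambda>w. y + 1 \<le> final_radius w \<and> T / rB^2 \<le> w) at_top"
      using final_radius_at_top[unfolded filterlim_at_top] eventually_ge_at_top by (intro eventually_conj) auto
    then obtain w2 where w2: "w2 \<ge> T / rB^2" "y < final_radius w2"
      unfolding eventually_at_top_linorder by force
    have "w2 \<in> good_velocities" using stays_above_large[OF w2(1)] by (auto simp: good_velocities_def)
    then have "w1 \<le> w2" using final_radius_mono[of w2 w1] w1 w2 by linarith
    then have sub: "{w1..w2} \<subseteq> good_velocities" using w1(1) good_velocities_increasing by auto
    have "continuous_on {w1..w2} final_radius"
      using sub final_radius_has_derivative
      by (metis DERIV_isCont continuous_at_imp_continuous_on subsetD)
    then obtain w where "w1 \<le> w" "w \<le> w2" "final_radius w = y"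
      using IVT'[of final_radius w1 y w2] w1 w2 \<open>w1 \<le> w2\<close> by auto
    then show "y \<in> final_radius ` good_velocities" using sub by force
  qed
qed

section \<open>Return to backward time\<close>

lemma past_solution_of_stays_above:
  assumes "stays_above \<epsilon> w"
  shows "past_solution \<delta> T rB (- w) (\<lambda>t. fst (trunc_sol \<epsilon> w (- t)))"
  unfolding past_solution_def
proof (intro exI[of _ "\<lambda>t. - velocity \<epsilon> w (- t)"] conjI ballI)
  fix t assume "t \<in> {-T..0}"
  then have t: "- t \<in> {0..T}" by auto
  show "0 < fst (trunc_sol \<epsilon> w (- t))"
    using stays_above_le[OF assms t] stays_above_pos[OF assms] by linarith
  show "((\<lambda>t. fst (trunc_sol \<epsilon> w (- t))) has_real_derivative - velocity \<epsilon> w (- t)) (at t within {-T..0})"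
    using has_real_derivative_reflect[OF stays_above_derivs(1)[OF assms t]] by simp
  show "((\<lambda>t. - velocity \<epsilon> w (- t)) has_real_derivative
      - \<delta> (fst (trunc_sol \<epsilon> w (- t))) * - velocity \<epsilon> w (- t) - 1 / (fst (trunc_sol \<epsilon> w (- t)))^2)
      (at t within {-T..0})"
    using DERIV_minus[OF has_real_derivative_reflect[OF stays_above_derivs(2)[OF assms t]]]
    by (simp add: algebra_simps)
next
  have "\<epsilon> > 0" using assms by (rule stays_above_pos)
  then show "fst (trunc_sol \<epsilon> w (- 0)) = rB" "- velocity \<epsilon> w (- 0) = - w"
    using trunc_sol_fst_0 trunc_sol_snd_0 by (simp_all add: velocity_def)
qed

lemma stays_above_of_past_solution:
  assumes "past_solution \<delta> T rB v r"
  obtains \<epsilon> where "stays_above \<epsilon> (- v)" "\<And>t. t \<in> {0..T} \<Longrightarrow> fst (trunc_sol \<epsilon> (- v) t) = r (- t)"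
proof -
  obtain r' where r: "\<And>t. t \<in> {-T..0} \<Longrightarrow> 0 < r t \<and> (r has_real_derivative r' t) (at t within {-T..0})
      \<and> (r' has_real_derivative (- \<delta> (r t) * r' t - 1 / (r t)^2)) (at t within {-T..0})"
    and "r 0 = rB" "r' 0 = v"
    using assms unfolding past_solution_def by blast
  have cont: "continuous_on {-T..0} r"
    unfolding continuous_on_eq_continuous_within using r DERIV_continuous by blast
  obtain tmin where "tmin \<in> {-T..0}" and tmin: "\<And>t. t \<in> {-T..0} \<Longrightarrow> r tmin \<le> r t"
    using continuous_attains_inf[OF compact_Icc _ cont] T_pos by fastforce
  define \<epsilon> where "\<epsilon> = r tmin"
  have "\<epsilon> > 0" using r[OF \<open>tmin \<in> {-T..0}\<close>] by (simp add: \<epsilon>_def)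
  have above: "\<epsilon> \<le> r (- s)" if "s \<in> {0..T}" for s using tmin[of "- s"] that by (simp add: \<epsilon>_def)
  define x where "x s = (r (- s), - r' (- s) - \<Delta> (r (- s)))" for s
  have "trunc_solution \<epsilon> x"
    unfolding trunc_solution_def
  proof
    fix s assume s: "s \<in> {0..T}"
    then have s': "- s \<in> {-T..0}" by auto
    obtain "(r has_real_derivative r' (- s)) (at (- s) within {-T..0})"
      "(r' has_real_derivative (- \<delta> (r (- s)) * r' (- s) - 1 / (r (- s))^2)) (at (- s) within {-T..0})"
      using r[OF s'] by blast
    from this[THEN has_real_derivative_reflect]
    have d1: "((\<lambda>s. r (- s)) has_real_derivative - r' (- s)) (at s within {0..T})"
      and d2: "((\<lambda>s. r' (- s)) has_real_derivative - (- \<delta> (r (- s)) * r' (- s) - 1 / (r (- s))^2))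
        (at s within {0..T})"
      by simp_all
    have d3: "((\<lambda>s. \<Delta> (r (- s))) has_real_derivative \<delta> (r (- s)) * - r' (- s)) (at s within {0..T})"
      by (rule DERIV_chain2[OF \<Delta>_deriv d1]) (use r[OF s'] in simp)
    have "(x has_vector_derivative (- r' (- s), - (- (- \<delta> (r (- s)) * r' (- s) - 1 / (r (- s))^2)) - \<delta> (r (- s)) * - r' (- s)))
        (at s within {0..T})"
      unfolding x_def using d1 DERIV_diff[OF DERIV_minus[OF d2] d3]
      by (intro has_vector_derivative_Pair) (simp_all add: has_real_derivative_iff_has_vector_derivative)
    then show "(x has_vector_derivative trunc_field \<epsilon> (x s)) (at s within {0..T})"
      using above[OF s] by (simp add: trunc_field_def x_def max_absorb1 algebra_simps)
  qed
  moreover have "x 0 = init_state (- v)" by (simp add: x_def init_state_def \<open>r 0 = rB\<close> \<open>r' 0 = v\<close>)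
  ultimately have eq: "trunc_sol \<epsilon> (- v) t = x t" if "t \<in> {0..T}" for t
    using trunc_solution_unique[OF \<open>\<epsilon> > 0\<close>] that by metis
  have "stays_above \<epsilon> (- v)" using \<open>\<epsilon> > 0\<close> eq above by (simp add: stays_above_def x_def)
  moreover have "fst (trunc_sol \<epsilon> (- v) t) = r (- t)" if "t \<in> {0..T}" for t using eq[OF that] by (simp add: x_def)
  ultimately show ?thesis by (rule that)
qed

lemma admissible_velocities_iff: "v \<in> admissible_velocities \<delta> T rB \<longleftrightarrow> - v \<in> good_velocities"
proof
  assume "v \<in> admissible_velocities \<delta> T rB"
  then obtain r where "past_solution \<delta> T rB v r" by (auto simp: admissible_velocities_def)
  then show "- v \<in> good_velocities"
    by (rule stays_above_of_past_solution) (auto simp: good_velocities_def)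
next
  assume "- v \<in> good_velocities"
  then obtain \<epsilon> where "stays_above \<epsilon> (- v)" by (auto simp: good_velocities_def)
  from past_solution_of_stays_above[OF this] show "v \<in> admissible_velocities \<delta> T rB"
    by (auto simp: admissible_velocities_def)
qed

lemma past_position_eq:
  assumes "v < - \<alpha>"
  shows "past_position \<delta> T rB v = final_radius (- v)"
proof -
  have "- v \<in> good_velocities" using assms good_velocities_eq by auto
  then obtain \<epsilon> where g: "stays_above \<epsilon> (- v)" by (auto simp: good_velocities_def)
  have "past_position \<delta> T rB v = fst (trunc_sol \<epsilon> (- v) T)"
    unfolding past_position_def
  proof (rule the_equality)
    show "\<exists>r. past_solution \<delta> T rB v r \<and> r (- T) = fst (trunc_sol \<epsilon> (- v) T)"
      using past_solution_of_stays_above[OF g] by auto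
  next
    fix y assume "\<exists>r. past_solution \<delta> T rB v r \<and> r (- T) = y"
    then obtain r where r: "past_solution \<delta> T rB v r" "r (- T) = y" by blast
    obtain \<epsilon>' where g': "stays_above \<epsilon>' (- v)"
      and eq: "\<And>t. t \<in> {0..T} \<Longrightarrow> fst (trunc_sol \<epsilon>' (- v) t) = r (- t)"
      using stays_above_of_past_solution[OF r(1)] by blast
    have "T \<in> {0..T}" using T_pos by simp
    then show "y = fst (trunc_sol \<epsilon> (- v) T)"
      using stays_above_trunc_sol_eq[OF g' g] eq r(2) by metis
  qed
  then show ?thesis using final_radius_eq[OF g] by simp
qed

lemma admissible_velocities_eq: "admissible_velocities \<delta> T rB = {..< - \<alpha>}"
  using admissible_velocities_iff good_velocities_eq by force

lemma past_position_image: "past_position \<delta> T rB ` {..< - \<alpha>} = {0<..}"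
proof -
  have "past_position \<delta> T rB ` {..< - \<alpha>} = (\<lambda>v. final_radius (- v)) ` {..< - \<alpha>}"
    by (rule image_cong) (auto simp: past_position_eq)
  also have "\<dots> = final_radius ` uminus ` {..< - \<alpha>}"
    by (simp only: image_image)
  also have "\<dots> = final_radius ` {\<alpha><..}"
    by simp
  finally show ?thesis using good_velocities_eq final_radius_image by simp
qed

lemma past_position_has_derivative:
  assumes "v < - \<alpha>"
  shows "\<exists>D<0. (past_position \<delta> T rB has_real_derivative D) (at v)"
proof -
  have "- v \<in> good_velocities" using assms good_velocities_eq by auto
  then obtain D where "D > 0" "(final_radius has_real_derivative D) (at (- v))"
    by (rule final_radius_has_derivative)
  then have "((\<lambda>v. final_radius (- v)) has_real_derivative - D) (at v)"
    by (simp add: DERIV_mirror)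
  then have "(past_position \<delta> T rB has_real_derivative - D) (at v)"
    by (rule has_field_derivative_transform_within_open[where S = "{..< - \<alpha>}"])
      (use assms past_position_eq in auto)
  then show ?thesis using \<open>D > 0\<close> by (intro exI[of _ "- D"]) simp
qed

lemma past_position_at_bot: "filterlim (past_position \<delta> T rB) at_top at_bot"
proof -
  have "filterlim (\<lambda>v. final_radius (- v)) at_top at_bot"
    by (rule filterlim_compose[OF final_radius_at_top filterlim_uminus_at_top_at_bot])
  moreover have "eventually (\<lambda>v. final_radius (- v) = past_position \<delta> T rB v) at_bot"
    unfolding eventually_at_bot_linorder using past_position_eq by (intro exI[of _ "- \<alpha> - 1"]) auto
  ultimately show ?thesis using filterlim_cong by fastforce
qed

lemma past_position_at_left: "(past_position \<delta> T rB \<longlongrightarrow> 0) (at_left (- \<alpha>))"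
proof -
  have "eventually (\<lambda>w. final_radius w = past_position \<delta> T rB (- w)) (at_right \<alpha>)"
    using eventually_at_right_less[of \<alpha>] by eventually_elim (simp add: past_position_eq)
  from tendsto_cong[OF this] final_radius_at_alpha
  show ?thesis unfolding filterlim_at_left_to_right by simp
qed

end

theorem lemma3p2:
  fixes \<delta> :: "real \<Rightarrow> real" and T rB :: real
  assumes nonneg: "\<And>x. x > 0 \<Longrightarrow> \<delta> x \<ge> 0"
    and bounded: "\<exists>M. \<forall>x>0. \<bar>\<delta> x\<bar> \<le> M"
    and C1: "\<exists>\<delta>'. continuous_on {0<..} \<delta>' \<and> (\<forall>x>0. (\<delta> has_real_derivative \<delta>' x) (at x))"
    and T_pos: "T > 0" and rB_pos: "rB > 0"
  shows "\<exists>\<beta>::real. admissible_velocities \<delta> T rB = {..<\<beta>}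
           \<and> past_position \<delta> T rB ` {..<\<beta>} = {0<..}
           \<and> (\<forall>v<\<beta>. \<exists>D<0. (past_position \<delta> T rB has_real_derivative D) (at v))
           \<and> filterlim (past_position \<delta> T rB) at_top at_bot
           \<and> (past_position \<delta> T rB \<longlongrightarrow> 0) (at_left \<beta>)"
proof -
  obtain M where "\<And>x. x > 0 \<Longrightarrow> \<bar>\<delta> x\<bar> \<le> M" using bounded by blast
  moreover obtain \<delta>' where "continuous_on {0<..} \<delta>'" "\<And>x. x > 0 \<Longrightarrow> (\<delta> has_real_derivative \<delta>' x) (at x)"
    using C1 by blast
  ultimately interpret damped_kepler \<delta> \<delta>' M T rB
    using nonneg T_pos rB_pos by unfold_locales (auto simp: abs_le_iff)
  show ?thesis
    using admissible_velocities_eq past_position_image past_position_has_derivative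
      past_position_at_bot past_position_at_left by blast
qed

end
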